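(* Let $k,\ell,m$ be integers with $0<k<\ell<m$ and $\ell-k>1$. Let $$E_{k,\ell,m}=\sum \prod_{j=1}^{m-1}\overline y_j^{\,\overline N_j}\underline y_j^{\,\underline N_j}\prod_{j=k+1}^{\ell-1}\overline w_j^{\,\overline H_j}\underline w_j^{\,\underline H_j}\prod_{j=0}^{m}z_j^{M_j}\prod_{j=k}^{\ell}\overline z_j^{\,\overline M_j}\underline z_j^{\,\underline M_j},$$ the sum being over all staircase polygons with a staircase hole with widths $k,\ell,m$ (equivalently, over all integer solutions of the system below with the stated sign constraints). Then $E_{k,\ell,m}$ is a rational function and $$E_{k,\ell,m}(1/\overline{\mathbf y},1/\underline{\mathbf y},1/\overline{\mathbf w},1/\underline{\mathbf w},1/\mathbf z,1/\overline{\mathbf z},1/\underline{\mathbf z})=-\frac{z_kz_\ell\prod_{j=1}^{m-1}(\overline y_j\underline y_j)\prod_{j=k+1}^{\ell-1}(\overline w_j\underline w_j)}{\prod_{j=1}^{m-1}z_j\prod_{j=k+1}^{\ell}\underline z_j\prod_{j=k}^{\ell-1}\overline z_j}\,E_{k,\ell,m}(\overline{\mathbf y},\underline{\mathbf y},\overline{\mathbf w},\underline{\mathbf w},\mathbf z,\overline{\mathbf z},\underline{\mathbf z}).$$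
   Context: On the square lattice, a staircase polygon is a self-avoiding polygon bounded by two paths of north and east steps with common endpoints (a convex polygon containing the south-west and north-east corners of its minimal bounding rectangle). A staircase polygon with a staircase hole is a polyomino whose outer boundary is a staircase polygon and which has one hole whose boundary is also a staircase polygon, the hole boundary not touching the outer boundary at any point. Place the figure between the lines $x=0$ and $x=m$ ($m$ = total width); the hole lies between $x=k$ and $x=\ell$. The figure is encoded by nonnegative integers: $\overline N_j,\underline N_j$ ($1\le j\le m-1$), the numbers of north steps on the line $x=j$ of the upper and lower outer boundary paths; $\overline H_j,\underline H_j$ ($k+1\le j\le\ell-1$), the numbers of north steps on $x=j$ of the upper and lower boundary paths of the hole; $M_0,M_m$, the heights of the left and right outer edges; $M_k,M_\ell$, the heights of the left and right edges of the hole; for other $j$ with $1\le j\le m-1$, $M_j$ is the length of the segment of $x=j$ shared by the two unit columns adjacent to $x=j$ (for $k<j<\ell$ these are the two columns of the hole, so the segment lies inside the hole); and for $k\le j\le\ell$, $\underline M_j$ (resp. $\overline M_j$) is the length of the portion of $x=j$ shared by the two adjacent columns of the figure lying below (resp. above) the hole. The unknowns $M_j,\overline M_j,\underline M_j$ are strictly positive, the others nonnegative, and figures with widths $k,\ell,m$ correspond bijectively to integer solutions of the system: $M_0-M_1-\underline N_1=0$; $M_j+\overline N_j-M_{j+1}-\underline N_{j+1}=0$ for $1\le j\le k-2$; $M_{k-1}+\overline N_{k-1}-\overline M_k-M_k-\underline M_k-\underline N_k=0$; $\underline M_\ell+M_\ell+\overline M_\ell+\overline N_\ell-M_{\ell+1}-\underline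 N_{\ell+1}=0$; $M_j+\overline N_j-M_{j+1}-\underline N_{j+1}=0$ for $\ell+1\le j\le m-2$; $M_{m-1}+\overline N_{m-1}-M_m=0$; $\underline M_k-\underline M_{k+1}-\underline N_{k+1}=0$; $\underline M_j+\underline H_j-\underline M_{j+1}-\underline N_{j+1}=0$ for $k+1\le j\le\ell-1$; $\overline M_j+\overline N_j-\overline M_{j+1}-\overline H_{j+1}=0$ for $k\le j\le\ell-2$; $\overline M_{\ell-1}+\overline N_{\ell-1}-\overline M_\ell=0$; $M_k-M_{k+1}-\underline H_{k+1}=0$; $M_j+\overline H_j-M_{j+1}-\underline H_{j+1}=0$ for $k+1\le j\le\ell-2$; $M_{\ell-1}+\overline H_{\ell-1}-M_\ell=0$. The variables $\overline y_j,\underline y_j,\overline w_j,\underline w_j,z_j,\overline z_j,\underline z_j$ are indeterminates attached to $\overline N_j,\underline N_j,\overline H_j,\underline H_j,M_j,\overline M_j,\underline M_j$ respectively; $1/\overline{\mathbf y}$ etc. denotes replacing each variable by its reciprocal. *)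

theory Defs
  imports Complex_Main "HOL-Library.Poly_Mapping"
begin

text \<open>Indeterminates: Yo j = overline y_j, Yu j = underline y_j, Wo j = overline w_j,
  Wu j = underline w_j, Z j = z_j, Zo j = overline z_j, Zu j = underline z_j.
  An exponent vector (monomial) is a finitely supported map var to nat; its entry at
  a variable is the value of the attached unknown (N, H, M).\<close>
datatype var = Yo nat | Yu nat | Wo nat | Wu nat | Z nat | Zo nat | Zu nat

definition relvars :: "nat \<Rightarrow> nat \<Rightarrow> nat \<Rightarrow> var set" where
  "relvars k l m =
     Yo ` {1..m-1} \<union> Yu ` {1..m-1} \<union> Wo ` {k+1..l-1} \<union> Wu ` {k+1..l-1}
     \<union> Z ` {0..m} \<union> Zo ` {k..l} \<union> Zu ` {k..l}"

text \<open>Unknowns outside their index range are not variables; their Poly_Mapping.lookup is 0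
  (this is how overline N_0 and underline N_m enter the boundary cases k = 1, l = m-1).\<close>
definition sol :: "nat \<Rightarrow> nat \<Rightarrow> nat \<Rightarrow> (var \<Rightarrow>\<^sub>0 nat) set" where
  "sol k l m = {a. Poly_Mapping.keys a \<subseteq> relvars k l m \<and>
     (let No = (\<lambda>j. Poly_Mapping.lookup a (Yo j)); Nu = (\<lambda>j. Poly_Mapping.lookup a (Yu j));
          Ho = (\<lambda>j. Poly_Mapping.lookup a (Wo j)); Hu = (\<lambda>j. Poly_Mapping.lookup a (Wu j));
          M = (\<lambda>j. Poly_Mapping.lookup a (Z j)); Mo = (\<lambda>j. Poly_Mapping.lookup a (Zo j)); Mu = (\<lambda>j. Poly_Mapping.lookup a (Zu j))
      in (\<forall>j\<in>{0..m}. M j > 0) \<and> (\<forall>j\<in>{k..l}. Mo j > 0 \<and> Mu j > 0)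
       \<and> (\<forall>j. j + 2 \<le> k \<longrightarrow> M j + No j = M (j+1) + Nu (j+1))
       \<and> M (k-1) + No (k-1) = Mo k + M k + Mu k + Nu k
       \<and> Mu l + M l + Mo l + No l = M (l+1) + Nu (l+1)
       \<and> (\<forall>j. l+1 \<le> j \<and> j \<le> m-1 \<longrightarrow> M j + No j = M (j+1) + Nu (j+1))
       \<and> Mu k = Mu (k+1) + Nu (k+1)
       \<and> (\<forall>j. k+1 \<le> j \<and> j \<le> l-1 \<longrightarrow> Mu j + Hu j = Mu (j+1) + Nu (j+1))
       \<and> (\<forall>j. k \<le> j \<and> j + 2 \<le> l \<longrightarrow> Mo j + No j = Mo (j+1) + Ho (j+1))
       \<and> Mo (l-1) + No (l-1) = Mo l
       \<and> M k = M (k+1) + Hu (k+1)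
       \<and> (\<forall>j. k+1 \<le> j \<and> j + 2 \<le> l \<longrightarrow> M j + Ho j = M (j+1) + Hu (j+1))
       \<and> M (l-1) + Ho (l-1) = M l)}"

type_synonym mpoly = "(var \<Rightarrow>\<^sub>0 nat) \<Rightarrow>\<^sub>0 int"

definition mono_eval :: "(var \<Rightarrow> real) \<Rightarrow> (var \<Rightarrow>\<^sub>0 nat) \<Rightarrow> real" where
  "mono_eval x a = (\<Prod>v\<in>Poly_Mapping.keys a. x v ^ Poly_Mapping.lookup a v)"

definition peval :: "mpoly \<Rightarrow> (var \<Rightarrow> real) \<Rightarrow> real" where
  "peval p x = (\<Sum>a\<in>Poly_Mapping.keys p. of_int (Poly_Mapping.lookup p a) * mono_eval x a)"

text \<open>The formal power series E = sum over S of the monomials x^b (coefficients 0/1,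
  since distinct solutions give distinct monomials) equals the rational function P/Q:
  Q is nonzero and Q * E = P as formal power series.\<close>
definition gf_eq_ratfun :: "(var \<Rightarrow>\<^sub>0 nat) set \<Rightarrow> mpoly \<Rightarrow> mpoly \<Rightarrow> bool" where
  "gf_eq_ratfun S P Q \<longleftrightarrow> Q \<noteq> 0 \<and>
     (\<forall>e. Poly_Mapping.lookup P e = (\<Sum>a\<in>Poly_Mapping.keys Q. if (\<exists>b\<in>S. a + b = e) then Poly_Mapping.lookup Q a else 0))"

definition recip :: "(var \<Rightarrow> real) \<Rightarrow> var \<Rightarrow> real" where
  "recip x = (\<lambda>v. inverse (x v))"

definition fac_num :: "nat \<Rightarrow> nat \<Rightarrow> nat \<Rightarrow> (var \<Rightarrow> real) \<Rightarrow> real" where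
  "fac_num k l m x = x (Z k) * x (Z l) * (\<Prod>j=1..m-1. x (Yo j) * x (Yu j))
     * (\<Prod>j=k+1..l-1. x (Wo j) * x (Wu j))"

definition fac_den :: "nat \<Rightarrow> nat \<Rightarrow> nat \<Rightarrow> (var \<Rightarrow> real) \<Rightarrow> real" where
  "fac_den k l m x = (\<Prod>j=1..m-1. x (Z j)) * (\<Prod>j=k+1..l. x (Zu j)) * (\<Prod>j=k..l-1. x (Zo j))"

end

(* A figure is encoded by the increments, along the cover relations of a poset P on the
   2m + 2(l - k) corner heights of its columns, of an order-preserving integer-valued map; the
   strict positivity constraints make this map a (P, \<omega>)-partition for the natural labelling \<omega>.
   Sorting a partition by value, ties broken by \<omega>, splits the partitions into disjoint half-open
   simplicial cones, one for each linear extension of P; this gives the rational generating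
   function. Reversing \<omega> exchanges the open and closed faces of every cone, so x \<mapsto> 1/x turns the
   generating function into (-1)^(|P| - 1) times that of the (P, reversed \<omega>)-partitions
   (Stanley's reciprocity). Adding the column index to a partition is a bijection between the two
   kinds of partitions which multiplies the monomials by fac_num / fac_den, once one observes that
   six of the strict constraints follow from the others; and |P| - 1 is odd. *)

theory Submission
  imports Defs "HOL-Library.Indicator_Function"
begin

section \<open>Polynomials acting on coefficient series\<close>

abbreviation lookup :: "('a \<Rightarrow>\<^sub>0 'b::zero) \<Rightarrow> 'a \<Rightarrow> 'b" where
  "lookup \<equiv> Poly_Mapping.lookup"

abbreviation keys :: "('a \<Rightarrow>\<^sub>0 'b::zero) \<Rightarrow> 'a set" where
  "keys \<equiv> Poly_Mapping.keys"

abbreviation monom :: "(var \<Rightarrow>\<^sub>0 nat) \<Rightarrow> mpoly" where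
  "monom a \<equiv> Poly_Mapping.single a 1"

definition monom_divides :: "(var \<Rightarrow>\<^sub>0 nat) \<Rightarrow> (var \<Rightarrow>\<^sub>0 nat) \<Rightarrow> bool" where
  "monom_divides a e \<longleftrightarrow> (\<exists>b. e = a + b)"

lemma monom_divides_add [simp]: "monom_divides a (a + b)"
  by (auto simp: monom_divides_def)

lemma monom_divides_zero [simp]: "monom_divides 0 e"
  by (auto simp: monom_divides_def)

lemma monom_divides_diff_cancel: "monom_divides a e \<Longrightarrow> a + (e - a) = e"
  by (auto simp: monom_divides_def)

lemma monom_divides_eq_add_iff: "monom_divides a e \<Longrightarrow> e = a + b \<longleftrightarrow> b = e - a"
  by (auto simp: monom_divides_def)

lemma monom_divides_add_iff:
  "monom_divides (a + b) e \<longleftrightarrow> monom_divides b e \<and> monom_divides a (e - b)"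
proof
  assume "monom_divides (a + b) e"
  then obtain c where "e = b + (a + c)"
    by (auto simp: monom_divides_def add_ac)
  then show "monom_divides b e \<and> monom_divides a (e - b)"
    by (simp add: monom_divides_def)
next
  assume "monom_divides b e \<and> monom_divides a (e - b)"
  then obtain c d where "e = b + c" "e - b = a + d"
    by (auto simp: monom_divides_def)
  then show "monom_divides (a + b) e"
    unfolding monom_divides_def by (metis add.assoc add.commute add_diff_cancel_left')
qed

type_synonym series = "(var \<Rightarrow>\<^sub>0 nat) \<Rightarrow> int"

definition shift_coeffs :: "(var \<Rightarrow>\<^sub>0 nat) \<Rightarrow> series \<Rightarrow> series" where
  "shift_coeffs a F e = (if monom_divides a e then F (e - a) else 0)"

lemma shift_coeffs_shift_coeffs: "shift_coeffs b (shift_coeffs a F) = shift_coeffs (a + b) F"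
  by (auto simp: fun_eq_iff shift_coeffs_def monom_divides_add_iff diff_diff_eq add.commute)

lemma shift_coeffs_scale: "shift_coeffs a (\<lambda>e. c * F e) e = c * shift_coeffs a F e"
  by (simp add: shift_coeffs_def)

lemma shift_coeffs_indicator: "shift_coeffs a (indicator S) = indicator ((+) a ` S)"
  by (auto simp: fun_eq_iff shift_coeffs_def indicator_def monom_divides_def)

lemma lookup_single_mult: "lookup (Poly_Mapping.single a c * R) e = c * shift_coeffs a (lookup R) e"
proof -
  have "lookup (Poly_Mapping.single a c * R) e = c * (\<Sum>q. lookup R q when e = a + q)"
    by (simp add: lookup_mult lookup_single when_mult Sum_any_right_distrib)
  also have "(\<Sum>q. lookup R q when e = a + q) = shift_coeffs a (lookup R) e"
  proof (cases "monom_divides a e")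
    case True
    then show ?thesis
      by (simp add: shift_coeffs_def monom_divides_eq_add_iff flip: eq_commute[of "e - a"])
  next
    case False
    then show ?thesis
      by (simp add: shift_coeffs_def when_def monom_divides_def)
  qed
  finally show ?thesis .
qed

lemma keys_single_mult: "keys (Poly_Mapping.single a c * R) \<subseteq> (+) a ` keys (R :: mpoly)"
proof
  fix e
  assume "e \<in> keys (Poly_Mapping.single a c * R)"
  then have "monom_divides a e" "e - a \<in> keys R"
    by (auto simp: in_keys_iff lookup_single_mult shift_coeffs_def split: if_splits)
  then show "e \<in> (+) a ` keys R"
    by (metis image_eqI monom_divides_diff_cancel)
qed

lemma update_eq_single_add:
  "a \<notin> keys f \<Longrightarrow> Poly_Mapping.update a b f = Poly_Mapping.single a b + f"
  by (rule poly_mapping_eqI) (auto simp: lookup_update lookup_add lookup_single in_keys_iff)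

lemma mono_eval_superset:
  "finite V \<Longrightarrow> keys a \<subseteq> V \<Longrightarrow> mono_eval x a = (\<Prod>v\<in>V. x v ^ lookup a v)"
  unfolding mono_eval_def by (rule prod.mono_neutral_left) (auto simp: in_keys_iff)

lemma mono_eval_add: "mono_eval x (a + b) = mono_eval x a * mono_eval x b"
proof -
  let ?V = "keys a \<union> keys b"
  have "mono_eval x (a + b) = (\<Prod>v\<in>?V. x v ^ lookup a v) * (\<Prod>v\<in>?V. x v ^ lookup b v)"
    by (subst mono_eval_superset[where V = ?V])
      (auto simp: lookup_add power_add prod.distrib dest: keys_add[THEN subsetD])
  then show ?thesis
    by (subst (1 2) mono_eval_superset[where V = ?V]) auto
qed

lemma mono_eval_zero [simp]: "mono_eval x 0 = 1"
  by (simp add: mono_eval_def)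

lemma mono_eval_single [simp]: "mono_eval x (Poly_Mapping.single v n) = x v ^ n"
  by (simp add: mono_eval_def)

lemma mono_eval_sum: "mono_eval x (\<Sum>i\<in>I. f i) = (\<Prod>i\<in>I. mono_eval x (f i))"
  by (induction I rule: infinite_finite_induct) (auto simp: mono_eval_add)

lemma mono_eval_recip: "mono_eval (recip x) a = inverse (mono_eval x a)"
  by (simp add: mono_eval_def recip_def power_inverse flip: prod_inversef)

lemma mono_eval_nonzero: "(\<And>v. x v \<noteq> 0) \<Longrightarrow> mono_eval x a \<noteq> 0"
  by (simp add: mono_eval_def)

lemma peval_superset:
  "finite A \<Longrightarrow> keys p \<subseteq> A \<Longrightarrow> peval p x = (\<Sum>a\<in>A. of_int (lookup p a) * mono_eval x a)"
  unfolding peval_def by (rule sum.mono_neutral_left) (auto simp: in_keys_iff)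

lemma peval_add: "peval (p + q) x = peval p x + peval q x"
proof -
  let ?A = "keys p \<union> keys q"
  have "peval (p + q) x = (\<Sum>a\<in>?A. of_int (lookup p a) * mono_eval x a)
      + (\<Sum>a\<in>?A. of_int (lookup q a) * mono_eval x a)"
    by (subst peval_superset[where A = ?A])
      (auto simp: lookup_add distrib_right sum.distrib dest: keys_add[THEN subsetD])
  then show ?thesis
    by (subst (1 2) peval_superset[where A = ?A]) auto
qed

lemma peval_diff: "peval (p - q) x = peval p x - peval q x"
  by (metis add_diff_cancel diff_add_cancel peval_add)

lemma peval_zero [simp]: "peval 0 x = 0"
  by (simp add: peval_def)

lemma peval_one [simp]: "peval 1 x = 1"
  by (simp add: peval_def lookup_one)

lemma peval_single_mult:
  "peval (Poly_Mapping.single a c * R) x = of_int c * mono_eval x a * peval R x"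
proof -
  have "peval (Poly_Mapping.single a c * R) x
      = (\<Sum>b\<in>(+) a ` keys R. of_int (lookup (Poly_Mapping.single a c * R) b) * mono_eval x b)"
    by (rule peval_superset) (auto simp: keys_single_mult)
  also have "\<dots> = (\<Sum>b\<in>keys R. of_int c * mono_eval x a * (of_int (lookup R b) * mono_eval x b))"
  proof -
    have "lookup (Poly_Mapping.single a c * R) (a + b) = c * lookup R b" for b
      by (simp add: lookup_single_mult shift_coeffs_def)
    then show ?thesis
      by (subst sum.reindex) (auto simp: inj_on_def mono_eval_add intro!: sum.cong)
  qed
  finally show ?thesis
    by (simp add: peval_def sum_distrib_left)
qed

lemma peval_monom: "peval (monom a) x = mono_eval x a"
  using peval_single_mult[of a 1 1 x] by simp

lemma peval_mult: "peval (p * q) x = peval p x * peval q x"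
proof (induction p rule: update_induct)
  case const
  then show ?case by simp
next
  case (update p a b)
  have "peval (Poly_Mapping.single a b) x = of_int b * mono_eval x a"
    using peval_single_mult[of a b 1 x] by simp
  then show ?case
    using update by (simp add: update_eq_single_add distrib_right peval_add peval_single_mult)
qed

lemma peval_sum: "peval (\<Sum>i\<in>I. f i) x = (\<Sum>i\<in>I. peval (f i) x)"
  by (induction I rule: infinite_finite_induct) (auto simp: peval_add)

lemma peval_prod: "peval (\<Prod>i\<in>I. f i) x = (\<Prod>i\<in>I. peval (f i) x)"
  by (induction I rule: infinite_finite_induct) (auto simp: peval_mult)

definition series_mult :: "mpoly \<Rightarrow> series \<Rightarrow> series" where
  "series_mult Q F e = (\<Sum>a\<in>keys Q. lookup Q a * shift_coeffs a F e)"

lemma series_mult_superset: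
  "finite A \<Longrightarrow> keys Q \<subseteq> A \<Longrightarrow> series_mult Q F e = (\<Sum>a\<in>A. lookup Q a * shift_coeffs a F e)"
  unfolding series_mult_def by (rule sum.mono_neutral_left) (auto simp: in_keys_iff)

lemma series_mult_add: "series_mult (p + q) F e = series_mult p F e + series_mult q F e"
proof -
  let ?A = "keys p \<union> keys q"
  have "series_mult (p + q) F e = (\<Sum>a\<in>?A. lookup p a * shift_coeffs a F e)
      + (\<Sum>a\<in>?A. lookup q a * shift_coeffs a F e)"
    by (subst series_mult_superset[where A = ?A])
      (auto simp: lookup_add distrib_right sum.distrib dest: keys_add[THEN subsetD])
  then show ?thesis
    by (subst (1 2) series_mult_superset[where A = ?A]) auto
qed

lemma series_mult_diff: "series_mult (p - q) F e = series_mult p F e - series_mult q F e"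
  by (metis add_diff_cancel diff_add_cancel series_mult_add)

lemma series_mult_single: "series_mult (Poly_Mapping.single a c) F e = c * shift_coeffs a F e"
  by (simp add: series_mult_def)

lemma series_mult_one [simp]: "series_mult 1 F = F"
  by (simp add: fun_eq_iff series_mult_def lookup_one shift_coeffs_def)

lemma series_mult_plus:
  "series_mult Q (\<lambda>e. F e + G e) e = series_mult Q F e + series_mult Q G e"
  by (auto simp: series_mult_def shift_coeffs_def distrib_left simp flip: sum.distrib
      intro!: sum.cong)

lemma series_mult_sum:
  "series_mult Q (\<lambda>e. \<Sum>i\<in>I. F i e) e = (\<Sum>i\<in>I. series_mult Q (F i) e)"
  unfolding series_mult_def shift_coeffs_def
  by (subst sum.swap) (auto simp: sum_distrib_left intro!: sum.cong)

lemma series_mult_single_mult: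
  "series_mult (Poly_Mapping.single a c * R) F = series_mult R (\<lambda>e. c * shift_coeffs a F e)"
proof
  fix e
  have "series_mult (Poly_Mapping.single a c * R) F e
      = (\<Sum>b\<in>(+) a ` keys R. lookup (Poly_Mapping.single a c * R) b * shift_coeffs b F e)"
    by (rule series_mult_superset) (auto simp: keys_single_mult)
  also have "\<dots> = (\<Sum>b\<in>keys R. lookup R b * shift_coeffs b (\<lambda>e. c * shift_coeffs a F e) e)"
  proof -
    have "lookup (Poly_Mapping.single a c * R) (a + b) = c * lookup R b" for b
      by (simp add: lookup_single_mult shift_coeffs_def)
    then show ?thesis
      by (subst sum.reindex)
        (auto simp: inj_on_def shift_coeffs_scale shift_coeffs_shift_coeffs intro!: sum.cong)
  qed
  finally show "series_mult (Poly_Mapping.single a c * R) F e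
      = series_mult R (\<lambda>e. c * shift_coeffs a F e) e"
    by (simp add: series_mult_def)
qed

lemma series_mult_mult: "series_mult (p * q) F = series_mult q (series_mult p F)"
proof (induction p rule: update_induct)
  case const
  then show ?case by (simp add: fun_eq_iff series_mult_def shift_coeffs_def)
next
  case (update p a b)
  then show ?case
    by (simp add: fun_eq_iff update_eq_single_add distrib_right series_mult_add
        series_mult_single_mult series_mult_single series_mult_plus)
qed

lemma series_mult_indicator_zero: "series_mult Q (indicator {0}) = lookup Q"
proof
  fix e
  have "series_mult Q (indicator {0}) e = (\<Sum>a\<in>keys Q. if a = e then lookup Q a else 0)"
    unfolding series_mult_def shift_coeffs_def
    by (intro sum.cong) (auto simp: monom_divides_def)
  then show "series_mult Q (indicator {0}) e = lookup Q e"
    by (simp add: in_keys_iff)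
qed

lemma series_mult_indicator_single: "series_mult R (indicator {a}) = lookup (monom a * R)"
proof -
  have "lookup (monom a * R) = series_mult R (\<lambda>e. 1 * shift_coeffs a (indicator {0}) e)"
    by (simp only: series_mult_single_mult flip: series_mult_indicator_zero)
  then show ?thesis
    by (simp add: shift_coeffs_indicator)
qed

lemma lookup_monom_mult_series:
  assumes "lookup P = series_mult Q (indicator S)"
  shows "lookup (monom u * P) = series_mult Q (indicator ((+) u ` S))"
proof -
  have "series_mult Q (indicator ((+) u ` S)) = series_mult (monom u * Q) (indicator S)"
    by (simp add: series_mult_single_mult shift_coeffs_indicator)
  also have "\<dots> = series_mult (monom u) (lookup P)"
    by (simp add: mult.commute series_mult_mult assms)
  finally show ?thesis
    by (simp add: fun_eq_iff series_mult_single lookup_single_mult)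
qed

lemma gf_eq_ratfun_iff: "gf_eq_ratfun S P Q \<longleftrightarrow> Q \<noteq> 0 \<and> lookup P = series_mult Q (indicator S)"
proof -
  have "(if \<exists>b\<in>S. a + b = e then lookup Q a else 0) = lookup Q a * shift_coeffs a (indicator S) e"
    for a e
    by (auto simp: shift_coeffs_def monom_divides_def indicator_def)
  then show ?thesis
    by (simp add: gf_eq_ratfun_def series_mult_def fun_eq_iff)
qed

section \<open>Generating functions of simplicial cones\<close>

definition nat_vectors :: "nat \<Rightarrow> (nat \<Rightarrow> nat) set" where
  "nat_vectors d = {g. \<forall>s\<ge>d. g s = 0}"

lemma nat_vectors_mono: "nat_vectors d \<subseteq> nat_vectors (Suc d)"
  by (auto simp: nat_vectors_def)

lemma nat_vectors_0: "nat_vectors 0 = {\<lambda>_. 0}"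
  by (auto simp: nat_vectors_def)

text \<open>\<open>F\<close> maps \<open>\<nat>\<^sup>d\<close> bijectively onto the cone with apex \<open>F 0\<close> and generators \<open>W s\<close>.\<close>

definition is_cone :: "nat \<Rightarrow> ((nat \<Rightarrow> nat) \<Rightarrow> (var \<Rightarrow>\<^sub>0 nat)) \<Rightarrow> (nat \<Rightarrow> var \<Rightarrow>\<^sub>0 nat) \<Rightarrow> bool" where
  "is_cone d F W \<longleftrightarrow> inj_on F (nat_vectors d) \<and>
     (\<forall>g\<in>nat_vectors d. \<forall>s<d. F (g(s := Suc (g s))) = W s + F g)"

lemma is_cone_Suc: "is_cone (Suc d) F W \<Longrightarrow> is_cone d F W"
  unfolding is_cone_def using nat_vectors_mono[of d] by (blast intro: inj_on_subset less_SucI)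

lemma cone_Suc_split:
  assumes "is_cone (Suc d) F W"
  shows "F ` nat_vectors (Suc d) = F ` nat_vectors d \<union> (+) (W d) ` F ` nat_vectors (Suc d)"
    and "F ` nat_vectors d \<inter> (+) (W d) ` F ` nat_vectors (Suc d) = {}"
proof -
  have inj: "inj_on F (nat_vectors (Suc d))"
    and step: "\<And>g. g \<in> nat_vectors (Suc d) \<Longrightarrow> F (g(d := Suc (g d))) = W d + F g"
    using assms by (auto simp: is_cone_def)
  have up: "g(d := Suc (g d)) \<in> nat_vectors (Suc d)" if "g \<in> nat_vectors (Suc d)" for g
    using that by (auto simp: nat_vectors_def)
  show "F ` nat_vectors (Suc d) = F ` nat_vectors d \<union> (+) (W d) ` F ` nat_vectors (Suc d)"
  proof (intro equalityI subsetI)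
    fix e
    assume "e \<in> F ` nat_vectors (Suc d)"
    then obtain g where g: "g \<in> nat_vectors (Suc d)" "e = F g" by auto
    show "e \<in> F ` nat_vectors d \<union> (+) (W d) ` F ` nat_vectors (Suc d)"
    proof (cases "g d")
      case 0
      have "g s = 0" if "d \<le> s" for s
        using g(1) 0 that by (cases "s = d") (auto simp: nat_vectors_def)
      then have "g \<in> nat_vectors d"
        by (simp add: nat_vectors_def)
      then show ?thesis using g by auto
    next
      case (Suc t)
      define g' where "g' = g(d := t)"
      have "g' \<in> nat_vectors (Suc d)" "g'(d := Suc (g' d)) = g"
        using g(1) Suc by (auto simp: g'_def nat_vectors_def)
      then show ?thesis using step g by (metis UnI2 image_eqI)
    qed
  next
    fix e
    assume "e \<in> F ` nat_vectors d \<union> (+) (W d) ` F ` nat_vectors (Suc d)"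
    then show "e \<in> F ` nat_vectors (Suc d)"
    proof
      assume "e \<in> F ` nat_vectors d"
      then show ?thesis using nat_vectors_mono by blast
    next
      assume "e \<in> (+) (W d) ` F ` nat_vectors (Suc d)"
      then obtain g where "g \<in> nat_vectors (Suc d)" "e = W d + F g" by auto
      then show ?thesis using step up by (metis image_eqI)
    qed
  qed
  show "F ` nat_vectors d \<inter> (+) (W d) ` F ` nat_vectors (Suc d) = {}"
  proof (rule ccontr)
    assume "F ` nat_vectors d \<inter> (+) (W d) ` F ` nat_vectors (Suc d) \<noteq> {}"
    then obtain g0 g1 where g: "g0 \<in> nat_vectors d" "g1 \<in> nat_vectors (Suc d)"
      and eq: "F g0 = F (g1(d := Suc (g1 d)))"
      using step by auto
    have "g0 = g1(d := Suc (g1 d))"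
      using inj eq g up[OF g(2)] nat_vectors_mono by (meson inj_onD subsetD)
    then show False
      using g(1) by (auto simp: nat_vectors_def dest: fun_cong[of _ _ d])
  qed
qed

lemma series_mult_cone:
  "is_cone d F W \<Longrightarrow>
     series_mult (\<Prod>s<d. 1 - monom (W s)) (indicator (F ` nat_vectors d)) = indicator {F (\<lambda>_. 0)}"
proof (induction d)
  case 0
  then show ?case by (simp add: nat_vectors_0)
next
  case (Suc d)
  let ?S = "F ` nat_vectors (Suc d)"
  have "series_mult (1 - monom (W d)) (indicator ?S) = indicator (F ` nat_vectors d)"
    using cone_Suc_split[OF Suc.prems]
    by (auto simp: fun_eq_iff series_mult_diff series_mult_single shift_coeffs_indicator
        indicator_def)
  then show ?case
    using Suc is_cone_Suc by (simp add: mult.commute series_mult_mult)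
qed

lemma series_mult_disjoint_cones:
  assumes "finite L"
    and cones: "\<And>p. p \<in> L \<Longrightarrow> is_cone d (F p) (W p)"
    and disjoint: "\<And>p p' g g'. p \<in> L \<Longrightarrow> p' \<in> L \<Longrightarrow> g \<in> nat_vectors d \<Longrightarrow>
      g' \<in> nat_vectors d \<Longrightarrow> F p g = F p' g' \<Longrightarrow> p = p'"
  defines "Q p \<equiv> \<Prod>s<d. 1 - monom (W p s)"
  shows "series_mult (\<Prod>p\<in>L. Q p) (indicator (\<Union>p\<in>L. F p ` nat_vectors d))
       = lookup (\<Sum>p\<in>L. monom (F p (\<lambda>_. 0)) * (\<Prod>q\<in>L - {p}. Q q))"
proof -
  have "disjoint_family_on (\<lambda>p. F p ` nat_vectors d) L"
    using disjoint by (auto simp: disjoint_family_on_def)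
  then have union: "indicator (\<Union>p\<in>L. F p ` nat_vectors d)
      = (\<lambda>e. \<Sum>p\<in>L. indicator (F p ` nat_vectors d) e)"
    using indicator_UN_disjoint[OF \<open>finite L\<close>] by (auto simp: fun_eq_iff)
  have cone: "series_mult (\<Prod>p\<in>L. Q p) (indicator (F p ` nat_vectors d))
      = lookup (monom (F p (\<lambda>_. 0)) * (\<Prod>q\<in>L - {p}. Q q))" if "p \<in> L" for p
  proof -
    have "(\<Prod>p\<in>L. Q p) = Q p * (\<Prod>q\<in>L - {p}. Q q)"
      using \<open>finite L\<close> that by (simp add: prod.remove)
    then show ?thesis
      using series_mult_cone[OF cones[OF that]]
      by (simp add: Q_def series_mult_mult series_mult_indicator_single)
  qed
  show ?thesis
    unfolding union by (simp add: fun_eq_iff series_mult_sum lookup_sum cone)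
qed

lemma peval_cone_denominator_recip:
  fixes x :: "var \<Rightarrow> real"
  assumes "\<And>v. x v \<noteq> 0"
  shows "peval (\<Prod>s\<in>S. 1 - monom (W s)) (recip x)
    = (-1) ^ card S * peval (\<Prod>s\<in>S. 1 - monom (W s)) x / mono_eval x (\<Sum>s\<in>S. W s)"
proof -
  have "(\<Prod>s\<in>S. 1 - mono_eval (recip x) (W s))
      = (\<Prod>s\<in>S. (-1) * ((1 - mono_eval x (W s)) / mono_eval x (W s)))"
    using mono_eval_nonzero[of x, OF assms]
    by (intro prod.cong) (simp_all add: mono_eval_recip field_simps)
  also have "\<dots> = (-1) ^ card S * ((\<Prod>s\<in>S. 1 - mono_eval x (W s)) / (\<Prod>s\<in>S. mono_eval x (W s)))"
    by (simp only: prod.distrib prod_dividef prod_constant)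
  finally show ?thesis
    by (simp add: peval_prod peval_diff peval_monom mono_eval_sum)
qed

text \<open>Stanley's reciprocity at the level of rational functions: the apex conditions hold for
  two families of half-open cones with complementary open and closed faces.\<close>

lemma cones_reciprocity:
  assumes "finite L" and x: "\<And>v. x v \<noteq> 0"
    and apexes: "\<And>p. p \<in> L \<Longrightarrow> A p + B p = (\<Sum>s<d. W p s)"
  defines "Q p \<equiv> \<Prod>s<d. 1 - monom (W p s)"
  shows "peval (\<Sum>p\<in>L. monom (A p) * (\<Prod>q\<in>L - {p}. Q q)) (recip x) * peval (\<Prod>p\<in>L. Q p) x
    = (-1) ^ d * peval (\<Sum>p\<in>L. monom (B p) * (\<Prod>q\<in>L - {p}. Q q)) x
        * peval (\<Prod>p\<in>L. Q p) (recip x)"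
proof -
  define c :: real where "c = (-1) ^ d"
  define w where "w p = mono_eval x (\<Sum>s<d. W p s)" for p
  define N where "N = card L"
  have Q_recip: "peval (Q p) (recip x) = c * peval (Q p) x / w p" for p
    using peval_cone_denominator_recip[of x "W p" "{..<d}", OF x] by (simp add: Q_def c_def w_def)
  have apex_recip: "mono_eval (recip x) (A p) = mono_eval x (B p) / w p" if "p \<in> L" for p
    using apexes[OF that, symmetric] mono_eval_nonzero[of x "A p", OF x]
      mono_eval_nonzero[of x "B p", OF x]
    by (simp add: w_def mono_eval_recip mono_eval_add field_simps)
  have numerator_recip: "peval (\<Sum>p\<in>L. monom (A p) * (\<Prod>q\<in>L - {p}. Q q)) (recip x)
      = c ^ (N - 1) * peval (\<Sum>p\<in>L. monom (B p) * (\<Prod>q\<in>L - {p}. Q q)) x / (\<Prod>p\<in>L. w p)"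
  proof -
    have "mono_eval (recip x) (A p) * (\<Prod>q\<in>L - {p}. peval (Q q) (recip x))
        = c ^ (N - 1) * (mono_eval x (B p) * (\<Prod>q\<in>L - {p}. peval (Q q) x)) / (\<Prod>p\<in>L. w p)"
      if "p \<in> L" for p
      using that \<open>finite L\<close>
      by (simp add: apex_recip Q_recip prod.distrib prod_dividef N_def prod.remove[of L p w])
    then show ?thesis
      by (simp add: peval_sum peval_mult peval_prod peval_monom sum_divide_distrib
          sum_distrib_left)
  qed
  have denominator_recip: "peval (\<Prod>p\<in>L. Q p) (recip x) = c ^ N * peval (\<Prod>p\<in>L. Q p) x / (\<Prod>p\<in>L. w p)"
    by (simp add: peval_prod Q_recip prod.distrib prod_dividef N_def)
  show ?thesis
  proof (cases "L = {}")
    case False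
    then obtain N' where "N = Suc N'"
      using \<open>finite L\<close> by (metis N_def card_0_eq not0_implies_Suc)
    moreover have "c * c = 1"
      by (simp add: c_def flip: power_mult_distrib)
    ultimately have "c ^ (N - 1) = c * c ^ N"
      by (simp flip: mult.assoc)
    then show ?thesis
      by (simp add: numerator_recip denominator_recip c_def)
  qed simp
qed

section \<open>\<open>(P, \<omega>)\<close>-partitions\<close>

text \<open>The poset \<open>P\<close> lives on the points \<open>{..<n}\<close>, each variable \<open>v \<in> edges\<close> being a cover
  relation \<open>lo v < hi v\<close>. The labelling \<open>\<omega>\<close> is the identity, or its reversal when \<open>rv\<close> holds,
  and \<open>v\<close> is strict when \<open>\<omega>\<close> decreases along it. Partitions are taken up to translation: their
  exponent vectors record the increments \<open>h (hi v) - h (lo v)\<close>. The last assumption says that the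
  Hasse diagram is connected.\<close>

locale poset_partitions =
  fixes n :: nat and lo hi :: "var \<Rightarrow> nat" and edges :: "var set"
  assumes finite_edges: "finite edges"
    and lo_less: "v \<in> edges \<Longrightarrow> lo v < n" and hi_less: "v \<in> edges \<Longrightarrow> hi v < n"
    and lo_neq_hi: "v \<in> edges \<Longrightarrow> lo v \<noteq> hi v"
    and connected: "\<And>h h'. (\<forall>v\<in>edges. h (hi v) - h (lo v) = h' (hi v) - h' (lo v)) \<Longrightarrow>
      \<exists>c. \<forall>i<n. h i = h' i + (c::int)"
begin

definition label :: "bool \<Rightarrow> nat \<Rightarrow> nat" where
  "label rv i = (if rv then n - 1 - i else i)"

definition strict_edge :: "bool \<Rightarrow> var \<Rightarrow> bool" where
  "strict_edge rv v \<longleftrightarrow> label rv (hi v) < label rv (lo v)"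

definition edge_diff :: "(nat \<Rightarrow> int) \<Rightarrow> var \<Rightarrow> int" where
  "edge_diff h v = h (hi v) - h (lo v)"

definition partitions :: "bool \<Rightarrow> (nat \<Rightarrow> int) set" where
  "partitions rv = {h. \<forall>v\<in>edges. edge_diff h v \<ge> of_bool (strict_edge rv v)}"

definition exponent :: "(nat \<Rightarrow> int) \<Rightarrow> var \<Rightarrow>\<^sub>0 nat" where
  "exponent h = Abs_poly_mapping (\<lambda>v. if v \<in> edges then nat (edge_diff h v) else 0)"

text \<open>An ordering maps each point to its position. Sorting the points by value, ties broken by
  the labelling, gives the ordering \<open>ranking rv h\<close>.\<close>

definition sort_key :: "bool \<Rightarrow> (nat \<Rightarrow> int) \<Rightarrow> nat \<Rightarrow> int" where
  "sort_key rv h i = h i * int n + int (label rv i)"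

definition ranking :: "bool \<Rightarrow> (nat \<Rightarrow> int) \<Rightarrow> nat \<Rightarrow> nat" where
  "ranking rv h = (\<lambda>i\<in>{..<n}. card {j\<in>{..<n}. sort_key rv h j < sort_key rv h i})"

definition orderings :: "(nat \<Rightarrow> nat) set" where
  "orderings = {p \<in> {..<n} \<rightarrow>\<^sub>E {..<n}. inj_on p {..<n}}"

definition linear_extensions :: "(nat \<Rightarrow> nat) set" where
  "linear_extensions = {p \<in> orderings. \<forall>v\<in>edges. p (lo v) < p (hi v)}"

abbreviation point_at :: "(nat \<Rightarrow> nat) \<Rightarrow> nat \<Rightarrow> nat" where
  "point_at p \<equiv> inv_into {..<n} p"

lemma label_less: "i < n \<Longrightarrow> label rv i < n"
  by (auto simp: label_def)

lemma label_inj: "i < n \<Longrightarrow> j < n \<Longrightarrow> label rv i = label rv j \<Longrightarrow> i = j"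
  by (auto simp: label_def split: if_splits)

lemma sort_key_less_iff:
  assumes "i < n" "j < n"
  shows "sort_key rv h i < sort_key rv h j \<longleftrightarrow> h i < h j \<or> (h i = h j \<and> label rv i < label rv j)"
proof -
  have labels: "int (label rv i) < int n" "int (label rv j) < int n"
    using assms label_less by auto
  consider "h i < h j" | "h i = h j" | "h j < h i" by linarith
  then show ?thesis
  proof cases
    case 1
    then have "(h i + 1) * int n \<le> h j * int n" by (intro mult_right_mono) auto
    then show ?thesis using 1 labels by (simp add: sort_key_def algebra_simps)
  next
    case 2
    then show ?thesis by (simp add: sort_key_def)
  next
    case 3
    then have "(h j + 1) * int n \<le> h i * int n" by (intro mult_right_mono) auto
    then show ?thesis using 3 labels by (simp add: sort_key_def algebra_simps)
  qed
qed

lemma sort_key_inj: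
  assumes "i < n" "j < n" "sort_key rv h i = sort_key rv h j"
  shows "i = j"
proof -
  have "h i = h j" "label rv i = label rv j"
    using sort_key_less_iff[OF assms(1,2), of rv h] sort_key_less_iff[OF assms(2,1), of rv h]
      assms(3) by auto
  then show ?thesis
    using label_inj assms(1,2) by blast
qed

lemma ranking_less: "i < n \<Longrightarrow> ranking rv h i < n"
proof -
  assume i: "i < n"
  have "{j\<in>{..<n}. sort_key rv h j < sort_key rv h i} \<subseteq> {..<n} - {i}" by auto
  then have "card {j\<in>{..<n}. sort_key rv h j < sort_key rv h i} \<le> card ({..<n} - {i})"
    by (intro card_mono) auto
  then show ?thesis using i by (simp add: ranking_def)
qed

lemma ranking_less_iff:
  assumes "i < n" "j < n"
  shows "ranking rv h i < ranking rv h j \<longleftrightarrow> sort_key rv h i < sort_key rv h j"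
proof -
  have mono: "ranking rv h i' < ranking rv h j'"
    if "i' < n" "j' < n" "sort_key rv h i' < sort_key rv h j'" for i' j'
    using that by (simp add: ranking_def) (rule psubset_card_mono; auto)
  show ?thesis
    using mono[of i j] mono[of j i] sort_key_inj[of i j rv h] assms
    by (metis less_asym' linorder_neqE)
qed

lemma ranking_in_orderings: "ranking rv h \<in> orderings"
proof -
  have "inj_on (ranking rv h) {..<n}"
    by (rule inj_onI) (metis lessThan_iff less_irrefl ranking_less_iff linorder_neqE sort_key_inj)
  moreover have "ranking rv h \<in> extensional {..<n}"
    by (simp add: ranking_def)
  ultimately show ?thesis
    by (auto simp: orderings_def PiE_iff ranking_less)
qed

lemma strict_edge_iff_sort_key:
  assumes "v \<in> edges"
  shows "edge_diff h v \<ge> of_bool (strict_edge rv v) \<longleftrightarrow> sort_key rv h (lo v) < sort_key rv h (hi v)"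
proof -
  have "label rv (lo v) \<noteq> label rv (hi v)"
    using label_inj assms lo_neq_hi lo_less hi_less by metis
  then show ?thesis
    using sort_key_less_iff[OF lo_less[OF assms] hi_less[OF assms], of rv h]
    by (auto simp: edge_diff_def strict_edge_def)
qed

lemma partitions_iff_ranking: "h \<in> partitions rv \<longleftrightarrow> ranking rv h \<in> linear_extensions"
  using ranking_in_orderings[of rv h]
  by (auto simp: partitions_def linear_extensions_def strict_edge_iff_sort_key ranking_less_iff
      lo_less hi_less)

lemma orderings_bij:
  assumes "p \<in> orderings"
  shows "bij_betw p {..<n} {..<n}"
proof -
  have "inj_on p {..<n}" "p ` {..<n} \<subseteq> {..<n}"
    using assms by (auto simp: orderings_def)
  then show ?thesis
    by (simp add: bij_betw_def endo_inj_surj)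
qed

lemma point_at_less: "p \<in> orderings \<Longrightarrow> s < n \<Longrightarrow> point_at p s < n"
  by (metis bij_betw_def inv_into_into lessThan_iff orderings_bij)

lemma at_point_at: "p \<in> orderings \<Longrightarrow> s < n \<Longrightarrow> p (point_at p s) = s"
  by (metis bij_betw_def f_inv_into_f lessThan_iff orderings_bij)

lemma point_at_at: "p \<in> orderings \<Longrightarrow> i < n \<Longrightarrow> point_at p (p i) = i"
  by (simp add: orderings_def inv_into_f_f)

lemma orderings_less: "p \<in> orderings \<Longrightarrow> i < n \<Longrightarrow> p i < n"
  by (auto simp: orderings_def)

lemma orderings_inj: "p \<in> orderings \<Longrightarrow> i < n \<Longrightarrow> j < n \<Longrightarrow> p i = p j \<Longrightarrow> i = j"
  by (auto simp: orderings_def inj_on_def)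

lemma point_at_Suc_neq: "p \<in> orderings \<Longrightarrow> Suc s < n \<Longrightarrow> point_at p s \<noteq> point_at p (Suc s)"
  by (metis Suc_lessD at_point_at n_not_Suc_n)

text \<open>A descent of the linear extension \<open>p\<close> at position \<open>s\<close> forces a strict increase from the
  \<open>s\<close>-th to the \<open>(s+1)\<close>-st point; \<open>cone_map rv p g\<close> is the partition with these forced
  increments plus the free increments \<open>g\<close>.\<close>

definition descent :: "bool \<Rightarrow> (nat \<Rightarrow> nat) \<Rightarrow> nat \<Rightarrow> int" where
  "descent rv p s = of_bool (label rv (point_at p (Suc s)) < label rv (point_at p s))"

definition cone_map :: "bool \<Rightarrow> (nat \<Rightarrow> nat) \<Rightarrow> (nat \<Rightarrow> nat) \<Rightarrow> nat \<Rightarrow> int" where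
  "cone_map rv p g i = (\<Sum>s<p i. int (g s) + descent rv p s)"

lemma descent_nonneg: "descent rv p s \<ge> 0"
  by (simp add: descent_def)

definition upset_indicator :: "(nat \<Rightarrow> nat) \<Rightarrow> nat \<Rightarrow> nat \<Rightarrow> int" where
  "upset_indicator p s i = of_bool (s < p i)"

lemma ranking_increment_ge_descent:
  fixes rv :: bool and h :: "nat \<Rightarrow> int"
  assumes "Suc s < n"
  defines "p \<equiv> ranking rv h"
  shows "h (point_at p (Suc s)) - h (point_at p s) \<ge> descent rv p s"
proof -
  have p: "p \<in> orderings" unfolding p_def by (rule ranking_in_orderings)
  have less: "point_at p s < n" "point_at p (Suc s) < n"
    using point_at_less[OF p] assms by auto
  have "p (point_at p s) < p (point_at p (Suc s))"
    using at_point_at[OF p] assms by simp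
  then have "sort_key rv h (point_at p s) < sort_key rv h (point_at p (Suc s))"
    using ranking_less_iff[OF less] by (simp add: p_def)
  then show ?thesis
    using sort_key_less_iff[OF less, of rv h] by (auto simp: descent_def)
qed

lemma partition_in_cone:
  fixes h :: "nat \<Rightarrow> int"
  obtains g where "g \<in> nat_vectors (n - 1)"
    and "\<forall>i<n. h i = h (point_at (ranking rv h) 0) + cone_map rv (ranking rv h) g i"
proof -
  define p where "p = ranking rv h"
  define g where "g s = (if Suc s < n then nat (h (point_at p (Suc s)) - h (point_at p s)
    - descent rv p s) else 0)" for s
  have p: "p \<in> orderings"
    unfolding p_def by (rule ranking_in_orderings)
  have at: "h (point_at p t) = h (point_at p 0) + (\<Sum>s<t. int (g s) + descent rv p s)"
    if "t < n" for t
    using that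
  proof (induction t)
    case (Suc t)
    have "int (g t) = h (point_at p (Suc t)) - h (point_at p t) - descent rv p t"
      using ranking_increment_ge_descent[OF Suc.prems, of rv h] Suc.prems
      by (simp add: g_def p_def)
    then show ?case using Suc by simp
  qed simp
  have "g \<in> nat_vectors (n - 1)"
    by (auto simp: nat_vectors_def g_def)
  moreover have "\<forall>i<n. h i = h (point_at p 0) + cone_map rv p g i"
    using at[OF orderings_less[OF p]] point_at_at[OF p] by (simp add: cone_map_def)
  ultimately show ?thesis
    using that by (simp add: p_def)
qed

lemma cone_map_at:
  "p \<in> orderings \<Longrightarrow> c < n \<Longrightarrow> cone_map rv p g (point_at p c) = (\<Sum>s<c. int (g s) + descent rv p s)"
  by (simp add: cone_map_def at_point_at)

lemma cone_map_diff:
  assumes "p \<in> orderings" "a \<le> c" "c < n"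
  shows "cone_map rv p g (point_at p c) - cone_map rv p g (point_at p a)
    = (\<Sum>s\<in>{a..<c}. int (g s) + descent rv p s)"
proof -
  have "(\<Sum>s<c. int (g s) + descent rv p s)
      = (\<Sum>s<a. int (g s) + descent rv p s) + (\<Sum>s\<in>{a..<c}. int (g s) + descent rv p s)"
    using assms(2) by (simp add: lessThan_atLeast0 sum.atLeastLessThan_concat)
  then show ?thesis
    using cone_map_at[OF assms(1)] assms by simp
qed

lemma label_increasing_without_descents:
  assumes p: "p \<in> orderings"
  shows "a < c \<Longrightarrow> c < n \<Longrightarrow> (\<forall>s\<in>{a..<c}. descent rv p s = 0) \<Longrightarrow>
    label rv (point_at p a) < label rv (point_at p c)"
proof (induction c)
  case (Suc c)
  have "label rv (point_at p c) \<noteq> label rv (point_at p (Suc c))"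
    using label_inj point_at_less[OF p] point_at_Suc_neq[OF p] Suc.prems(2)
    by (metis Suc_lessD)
  moreover have "descent rv p c = 0"
    using Suc.prems(1,3) by simp
  ultimately have "label rv (point_at p c) < label rv (point_at p (Suc c))"
    by (auto simp: descent_def)
  then show ?case
    using Suc by (cases "a = c") auto
qed simp

lemma cone_map_sort_key_less:
  assumes p: "p \<in> orderings" and ij: "i < n" "j < n" "p i < p j"
  shows "sort_key rv (cone_map rv p g) i < sort_key rv (cone_map rv p g) j"
proof -
  have pj: "p j < n" using p ij by (simp add: orderings_less)
  have diff: "cone_map rv p g j - cone_map rv p g i = (\<Sum>s\<in>{p i..<p j}. int (g s) + descent rv p s)"
    using cone_map_diff[OF p _ pj, of "p i" rv g] ij point_at_at[OF p] by simp
  have nonneg: "\<forall>s\<in>{p i..<p j}. int (g s) + descent rv p s \<ge> 0"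
    by (simp add: descent_nonneg add_nonneg_nonneg)
  show ?thesis
  proof (cases "(\<Sum>s\<in>{p i..<p j}. int (g s) + descent rv p s) = 0")
    case True
    then have "\<forall>s\<in>{p i..<p j}. int (g s) + descent rv p s = 0"
      using nonneg by (subst (asm) sum_nonneg_eq_0_iff) auto
    then have "\<forall>s\<in>{p i..<p j}. descent rv p s = 0"
      by (metis add_nonneg_eq_0_iff descent_nonneg of_nat_0_le_iff)
    then have "label rv i < label rv j"
      using label_increasing_without_descents[OF p ij(3) pj] point_at_at[OF p] ij by simp
    then show ?thesis
      using diff True sort_key_less_iff[OF ij(1,2)] by simp
  next
    case False
    then have "cone_map rv p g i < cone_map rv p g j"
      using diff nonneg sum_nonneg[of "{p i..<p j}"] by fastforce
    then show ?thesis using sort_key_less_iff[OF ij(1,2)] by simp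
  qed
qed

lemma ranking_translate: "ranking rv (\<lambda>i. h i + c) = ranking rv h"
  by (simp add: ranking_def sort_key_def algebra_simps)

lemma ranking_cong: "(\<And>i. i < n \<Longrightarrow> h i = h' i) \<Longrightarrow> ranking rv h = ranking rv h'"
  unfolding ranking_def sort_key_def by (intro restrict_ext) (auto intro!: arg_cong[where f=card])

lemma ranking_cone_map:
  assumes p: "p \<in> orderings"
  shows "ranking rv (cone_map rv p g) = p"
proof
  fix i
  show "ranking rv (cone_map rv p g) i = p i"
  proof (cases "i < n")
    case False
    then show ?thesis using p by (auto simp: ranking_def orderings_def PiE_def extensional_def)
  next
    case i: True
    have iff: "sort_key rv (cone_map rv p g) j < sort_key rv (cone_map rv p g) i \<longleftrightarrow> p j < p i"
      if j: "j < n" for j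
      using cone_map_sort_key_less[OF p j i] cone_map_sort_key_less[OF p i j, of rv g]
        orderings_inj[OF p j i] by (metis less_asym linorder_neqE)
    have "ranking rv (cone_map rv p g) i = card {j\<in>{..<n}. p j < p i}"
      unfolding ranking_def using i iff by (auto intro!: arg_cong[where f=card])
    also have "\<dots> = card (p ` {j\<in>{..<n}. p j < p i})"
      using p by (intro card_image[symmetric]) (auto simp: orderings_def intro: inj_on_subset)
    also have "p ` {j\<in>{..<n}. p j < p i} = {..<p i}"
      using orderings_bij[OF p] orderings_less[OF p i] by (auto simp: bij_betw_def)
    finally show ?thesis by simp
  qed
qed

lemma cone_map_Suc:
  "cone_map rv p (g(s := Suc (g s))) i = cone_map rv p g i + upset_indicator p s i"
proof -
  have "cone_map rv p (g(s := Suc (g s))) i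
      = (\<Sum>r<p i. (int (g r) + descent rv p r) + of_bool (r = s))"
    unfolding cone_map_def by (rule sum.cong) auto
  then show ?thesis
    by (simp add: sum.distrib cone_map_def upset_indicator_def)
qed

text \<open>Reversing the labelling turns every ascent into a descent and vice versa.\<close>

lemma cone_map_reverse:
  assumes p: "p \<in> orderings" and i: "i < n"
  shows "cone_map True p (\<lambda>_. 0) i + cone_map False p (\<lambda>_. 0) i = (\<Sum>s<n-1. upset_indicator p s i)"
proof -
  have "descent True p s + descent False p s = 1" if "s < p i" for s
  proof -
    have s: "Suc s < n" using that orderings_less[OF p i] by simp
    then show ?thesis
      using point_at_less[OF p, of s] point_at_less[OF p, of "Suc s"] point_at_Suc_neq[OF p s]
      by (auto simp: descent_def label_def)
  qed
  then have "cone_map True p (\<lambda>_. 0) i + cone_map False p (\<lambda>_. 0) i = (\<Sum>s<p i. 1)"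
    by (simp add: cone_map_def flip: sum.distrib)
  also have "\<dots> = (\<Sum>s<n-1. upset_indicator p s i)"
    using orderings_less[OF p i]
    by (intro sum.mono_neutral_cong_right[symmetric]) (auto simp: upset_indicator_def)
  finally show ?thesis .
qed

lemma lookup_exponent: "lookup (exponent h) v = (if v \<in> edges then nat (edge_diff h v) else 0)"
proof -
  have "finite {v. (if v \<in> edges then nat (edge_diff h v) else 0) \<noteq> 0}"
    by (rule finite_subset[OF _ finite_edges]) auto
  then show ?thesis
    by (simp add: exponent_def)
qed

lemma edge_diff_add: "edge_diff (\<lambda>i. h i + h' i) v = edge_diff h v + edge_diff h' v"
  by (simp add: edge_diff_def)

lemma edge_diff_sum: "edge_diff (\<lambda>i. \<Sum>s\<in>S. f s i) v = (\<Sum>s\<in>S. edge_diff (f s) v)"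
  by (simp add: edge_diff_def sum_subtractf)

lemma exponent_add:
  assumes "\<forall>v\<in>edges. edge_diff h v \<ge> 0" "\<forall>v\<in>edges. edge_diff h' v \<ge> 0"
  shows "exponent (\<lambda>i. h i + h' i) = exponent h + exponent h'"
  using assms
  by (intro poly_mapping_eqI) (auto simp: lookup_add lookup_exponent edge_diff_add nat_add_distrib)

lemma exponent_translate: "\<forall>i<n. h i = h' i + c \<Longrightarrow> exponent h = exponent h'"
  by (intro poly_mapping_eqI) (simp add: lookup_exponent edge_diff_def lo_less hi_less)

lemma exponent_zero: "exponent (\<lambda>_. 0) = 0"
  by (intro poly_mapping_eqI) (simp add: lookup_exponent edge_diff_def)

lemma exponent_sum:
  assumes "finite S" "\<forall>s\<in>S. \<forall>v\<in>edges. edge_diff (f s) v \<ge> 0"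
  shows "exponent (\<lambda>i. \<Sum>s\<in>S. f s i) = (\<Sum>s\<in>S. exponent (f s))"
  using assms
proof (induction S rule: finite_induct)
  case empty
  then show ?case by (simp add: exponent_zero)
next
  case (insert s S)
  then have "exponent (\<lambda>i. f s i + (\<Sum>s\<in>S. f s i)) = exponent (f s) + exponent (\<lambda>i. \<Sum>s\<in>S. f s i)"
    by (intro exponent_add) (auto simp: edge_diff_sum intro!: sum_nonneg)
  then show ?case using insert by simp
qed

lemma partitions_edge_diff_nonneg: "h \<in> partitions rv \<Longrightarrow> v \<in> edges \<Longrightarrow> edge_diff h v \<ge> 0"
  unfolding partitions_def by (cases "strict_edge rv v") auto

lemma int_lookup_exponent:
  "h \<in> partitions rv \<Longrightarrow> int (lookup (exponent h) v) = (if v \<in> edges then edge_diff h v else 0)"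
  by (simp add: lookup_exponent partitions_edge_diff_nonneg)

lemma upset_indicator_edge_diff_nonneg:
  "p \<in> linear_extensions \<Longrightarrow> v \<in> edges \<Longrightarrow> edge_diff (upset_indicator p s) v \<ge> 0"
  by (auto simp: linear_extensions_def edge_diff_def upset_indicator_def)

lemma cone_map_in_partitions: "p \<in> linear_extensions \<Longrightarrow> cone_map rv p g \<in> partitions rv"
  by (simp add: partitions_iff_ranking ranking_cone_map linear_extensions_def)

definition cone_exponent :: "bool \<Rightarrow> (nat \<Rightarrow> nat) \<Rightarrow> (nat \<Rightarrow> nat) \<Rightarrow> var \<Rightarrow>\<^sub>0 nat" where
  "cone_exponent rv p g = exponent (cone_map rv p g)"

definition cone_generator :: "(nat \<Rightarrow> nat) \<Rightarrow> nat \<Rightarrow> var \<Rightarrow>\<^sub>0 nat" where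
  "cone_generator p s = exponent (upset_indicator p s)"

definition denominator :: mpoly where
  "denominator = (\<Prod>p\<in>linear_extensions. \<Prod>s<n-1. 1 - monom (cone_generator p s))"

definition numerator :: "bool \<Rightarrow> mpoly" where
  "numerator rv = (\<Sum>p\<in>linear_extensions. monom (cone_exponent rv p (\<lambda>_. 0))
     * (\<Prod>q\<in>linear_extensions - {p}. \<Prod>s<n-1. 1 - monom (cone_generator q s)))"

lemma finite_linear_extensions: "finite linear_extensions"
proof (rule finite_subset)
  show "linear_extensions \<subseteq> {..<n} \<rightarrow>\<^sub>E {..<n}"
    by (auto simp: linear_extensions_def orderings_def)
qed (simp add: finite_PiE)

lemma linear_extensions_orderings: "p \<in> linear_extensions \<Longrightarrow> p \<in> orderings"
  by (simp add: linear_extensions_def)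

lemma cone_exponent_inj:
  assumes p: "p \<in> linear_extensions" "p' \<in> linear_extensions"
    and g: "g \<in> nat_vectors (n-1)" "g' \<in> nat_vectors (n-1)"
    and eq: "cone_exponent rv p g = cone_exponent rv p' g'"
  shows "p = p' \<and> g = g'"
proof -
  have "\<forall>v\<in>edges. edge_diff (cone_map rv p g) v = edge_diff (cone_map rv p' g') v"
    using eq int_lookup_exponent[OF cone_map_in_partitions[OF p(1)]]
      int_lookup_exponent[OF cone_map_in_partitions[OF p(2)]]
    by (metis cone_exponent_def)
  then have "\<exists>c. \<forall>i<n. cone_map rv p g i = cone_map rv p' g' i + c"
    using connected[of "cone_map rv p g" "cone_map rv p' g'"] by (simp add: edge_diff_def)
  then obtain c where c: "\<forall>i<n. cone_map rv p g i = cone_map rv p' g' i + c"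
    by blast
  have "p = ranking rv (cone_map rv p g)"
    using ranking_cone_map linear_extensions_orderings p by simp
  also have "\<dots> = ranking rv (\<lambda>i. cone_map rv p' g' i + c)"
    using c by (intro ranking_cong) auto
  also have "\<dots> = p'"
    using ranking_translate ranking_cone_map linear_extensions_orderings p by simp
  finally have "p = p'" .
  have "g s = g' s" for s
  proof (cases "s < n - 1")
    case True
    then have s: "Suc s < n" by simp
    have pp: "p \<in> orderings" using p linear_extensions_orderings by auto
    have "point_at p s < n" "point_at p (Suc s) < n"
      using point_at_less[OF pp] s by auto
    then have "cone_map rv p g (point_at p (Suc s)) - cone_map rv p g (point_at p s)
        = cone_map rv p g' (point_at p (Suc s)) - cone_map rv p g' (point_at p s)"
      using c \<open>p = p'\<close> by simp
    then show ?thesis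
      using cone_map_diff[OF pp _ s, of s rv g] cone_map_diff[OF pp _ s, of s rv g'] by simp
  next
    case False
    then show ?thesis using g by (simp add: nat_vectors_def)
  qed
  then show ?thesis using \<open>p = p'\<close> by auto
qed

lemma cone_exponent_Suc:
  assumes p: "p \<in> linear_extensions"
  shows "cone_exponent rv p (g(s := Suc (g s))) = cone_generator p s + cone_exponent rv p g"
proof -
  have "cone_map rv p (g(s := Suc (g s))) = (\<lambda>i. cone_map rv p g i + upset_indicator p s i)"
    by (simp add: fun_eq_iff cone_map_Suc)
  then show ?thesis
    using exponent_add partitions_edge_diff_nonneg[OF cone_map_in_partitions[OF p]]
      upset_indicator_edge_diff_nonneg[OF p]
    by (simp add: cone_exponent_def cone_generator_def add.commute)
qed

lemma cone_exponent_is_cone: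
  assumes "p \<in> linear_extensions"
  shows "is_cone (n - 1) (cone_exponent rv p) (cone_generator p)"
  unfolding is_cone_def
proof (intro conjI ballI allI impI inj_onI)
  show "g = g'" if "g \<in> nat_vectors (n - 1)" "g' \<in> nat_vectors (n - 1)"
    and "cone_exponent rv p g = cone_exponent rv p g'" for g g'
    using cone_exponent_inj[OF assms assms that] by blast
qed (rule cone_exponent_Suc[OF assms])

lemma exponent_partitions_eq_cones:
  "exponent ` partitions rv = (\<Union>p\<in>linear_extensions. cone_exponent rv p ` nat_vectors (n-1))"
proof
  show "(\<Union>p\<in>linear_extensions. cone_exponent rv p ` nat_vectors (n-1)) \<subseteq> exponent ` partitions rv"
    using cone_map_in_partitions by (auto simp: cone_exponent_def)
next
  show "exponent ` partitions rv \<subseteq> (\<Union>p\<in>linear_extensions. cone_exponent rv p ` nat_vectors (n-1))"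
  proof
    fix a
    assume "a \<in> exponent ` partitions rv"
    then obtain h where h: "h \<in> partitions rv" "a = exponent h" by auto
    obtain g where g: "g \<in> nat_vectors (n - 1)"
      and cone: "\<forall>i<n. h i = h (point_at (ranking rv h) 0) + cone_map rv (ranking rv h) g i"
      by (rule partition_in_cone)
    have "exponent h = exponent (cone_map rv (ranking rv h) g)"
      using cone by (intro exponent_translate[where c = "h (point_at (ranking rv h) 0)"])
        (simp add: add.commute)
    then have "a = cone_exponent rv (ranking rv h) g"
      using h(2) by (simp add: cone_exponent_def)
    moreover have "ranking rv h \<in> linear_extensions"
      using h partitions_iff_ranking by auto
    ultimately show "a \<in> (\<Union>p\<in>linear_extensions. cone_exponent rv p ` nat_vectors (n-1))"
      using g by auto
  qed
qed

theorem series_mult_partitions: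
  "series_mult denominator (indicator (exponent ` partitions rv)) = lookup (numerator rv)"
  unfolding exponent_partitions_eq_cones denominator_def numerator_def
proof (rule series_mult_disjoint_cones[OF finite_linear_extensions])
  show "is_cone (n - 1) (cone_exponent rv p) (cone_generator p)" if "p \<in> linear_extensions" for p
    using that by (rule cone_exponent_is_cone)
qed (use cone_exponent_inj in blast)

lemma cone_apexes_sum:
  assumes p: "p \<in> linear_extensions"
  shows "cone_exponent False p (\<lambda>_. 0) + cone_exponent True p (\<lambda>_. 0) = (\<Sum>s<n-1. cone_generator p s)"
proof -
  have nonneg: "v \<in> edges \<Longrightarrow> edge_diff (cone_map rv p (\<lambda>_. 0)) v \<ge> 0" for rv v
    using partitions_edge_diff_nonneg cone_map_in_partitions[OF p] by blast
  have "cone_exponent False p (\<lambda>_. 0) + cone_exponent True p (\<lambda>_. 0)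
      = exponent (\<lambda>i. cone_map False p (\<lambda>_. 0) i + cone_map True p (\<lambda>_. 0) i)"
    by (simp add: cone_exponent_def exponent_add nonneg)
  also have "\<dots> = exponent (\<lambda>i. \<Sum>s<n-1. upset_indicator p s i)"
    using cone_map_reverse[OF linear_extensions_orderings[OF p]]
    by (intro exponent_translate[where c = 0]) (simp add: add.commute)
  also have "\<dots> = (\<Sum>s<n-1. cone_generator p s)"
    unfolding cone_generator_def by (rule exponent_sum) (use upset_indicator_edge_diff_nonneg p in auto)
  finally show ?thesis .
qed

theorem partitions_reciprocity:
  assumes "\<And>v. x v \<noteq> 0"
  shows "peval (numerator False) (recip x) * peval denominator x
    = (-1) ^ (n - 1) * peval (numerator True) x * peval denominator (recip x)"
  unfolding numerator_def denominator_def
  by (rule cones_reciprocity[OF finite_linear_extensions assms cone_apexes_sum])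

lemma cone_generator_nonzero:
  assumes p: "p \<in> linear_extensions" and s: "s < n - 1"
  shows "cone_generator p s \<noteq> 0"
proof
  assume "cone_generator p s = 0"
  then have "cone_exponent False p ((\<lambda>_. 0)(s := 1)) = cone_exponent False p (\<lambda>_. 0)"
    using cone_exponent_Suc[OF p, of False "\<lambda>_. 0" s] by simp
  moreover have "(\<lambda>_. 0)(s := 1) \<in> nat_vectors (n-1)" "(\<lambda>_. 0) \<in> nat_vectors (n-1)"
    using s by (auto simp: nat_vectors_def)
  ultimately have "((\<lambda>_. 0)(s := 1) :: nat \<Rightarrow> nat) = (\<lambda>_. 0)"
    using cone_exponent_inj[OF p p] by blast
  then show False
    by (metis fun_upd_same one_neq_zero)
qed

lemma denominator_nonzero: "denominator \<noteq> 0"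
proof
  assume "denominator = 0"
  then have "peval denominator (\<lambda>_. 1/2) = 0" by simp
  moreover have "mono_eval (\<lambda>_. 1/2) (cone_generator p s) < 1"
    if p: "p \<in> linear_extensions" and s: "s < n - 1" for p s
  proof -
    define W where "W = cone_generator p s"
    obtain v where v: "v \<in> keys W"
      using cone_generator_nonzero[OF p s] by (metis W_def ex_in_conv keys_eq_empty)
    then have "lookup W v \<le> (\<Sum>v\<in>keys W. lookup W v)"
      by (intro member_le_sum) auto
    moreover have "1 \<le> lookup W v"
      using v by (simp add: in_keys_iff)
    ultimately have "(1/2::real) ^ (\<Sum>v\<in>keys W. lookup W v) \<le> 1/2"
      using power_decreasing[of 1 _ "1/2::real"] by simp
    then show ?thesis
      by (simp add: W_def mono_eval_def power_sum)
  qed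
  ultimately show False
    using finite_linear_extensions
    by (auto simp: denominator_def peval_prod peval_diff peval_monom) (metis less_irrefl)
qed

end

section \<open>The poset of a staircase polygon with a staircase hole\<close>

lemma mem_relvars [simp]:
  "Yo j \<in> relvars k l m \<longleftrightarrow> 1 \<le> j \<and> j \<le> m - 1"
  "Yu j \<in> relvars k l m \<longleftrightarrow> 1 \<le> j \<and> j \<le> m - 1"
  "Wo j \<in> relvars k l m \<longleftrightarrow> k + 1 \<le> j \<and> j \<le> l - 1"
  "Wu j \<in> relvars k l m \<longleftrightarrow> k + 1 \<le> j \<and> j \<le> l - 1"
  "Z j \<in> relvars k l m \<longleftrightarrow> j \<le> m"
  "Zo j \<in> relvars k l m \<longleftrightarrow> k \<le> j \<and> j \<le> l"
  "Zu j \<in> relvars k l m \<longleftrightarrow> k \<le> j \<and> j \<le> l"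
  by (auto simp: relvars_def)

definition strict_var :: "var \<Rightarrow> bool" where
  "strict_var v \<longleftrightarrow> (case v of Z _ \<Rightarrow> True | Zo _ \<Rightarrow> True | Zu _ \<Rightarrow> True | _ \<Rightarrow> False)"

lemma strict_var_simps [simp]:
  "strict_var (Z j)" "strict_var (Zo j)" "strict_var (Zu j)"
  "\<not> strict_var (Yo j)" "\<not> strict_var (Yu j)" "\<not> strict_var (Wo j)" "\<not> strict_var (Wu j)"
  by (simp_all add: strict_var_def)

definition column_equations :: "nat \<Rightarrow> nat \<Rightarrow> nat \<Rightarrow> (var \<Rightarrow> int) \<Rightarrow> bool" where
  "column_equations k l m f \<longleftrightarrow>
     (\<forall>j. j + 2 \<le> k \<longrightarrow> f (Z j) + f (Yo j) = f (Z (j+1)) + f (Yu (j+1)))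
     \<and> f (Z (k-1)) + f (Yo (k-1)) = f (Zo k) + f (Z k) + f (Zu k) + f (Yu k)
     \<and> f (Zu l) + f (Z l) + f (Zo l) + f (Yo l) = f (Z (l+1)) + f (Yu (l+1))
     \<and> (\<forall>j. l+1 \<le> j \<and> j \<le> m-1 \<longrightarrow> f (Z j) + f (Yo j) = f (Z (j+1)) + f (Yu (j+1)))
     \<and> f (Zu k) = f (Zu (k+1)) + f (Yu (k+1))
     \<and> (\<forall>j. k+1 \<le> j \<and> j \<le> l-1 \<longrightarrow> f (Zu j) + f (Wu j) = f (Zu (j+1)) + f (Yu (j+1)))
     \<and> (\<forall>j. k \<le> j \<and> j + 2 \<le> l \<longrightarrow> f (Zo j) + f (Yo j) = f (Zo (j+1)) + f (Wo (j+1)))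
     \<and> f (Zo (l-1)) + f (Yo (l-1)) = f (Zo l)
     \<and> f (Z k) = f (Z (k+1)) + f (Wu (k+1))
     \<and> (\<forall>j. k+1 \<le> j \<and> j + 2 \<le> l \<longrightarrow> f (Z j) + f (Wo j) = f (Z (j+1)) + f (Wu (j+1)))
     \<and> f (Z (l-1)) + f (Wo (l-1)) = f (Z l)"

lemma sol_iff:
  "a \<in> sol k l m \<longleftrightarrow> keys a \<subseteq> relvars k l m
    \<and> (\<forall>v\<in>relvars k l m. strict_var v \<longrightarrow> lookup a v > 0)
    \<and> column_equations k l m (\<lambda>v. int (lookup a v))"
proof -
  have "(\<forall>v\<in>relvars k l m. strict_var v \<longrightarrow> lookup a v > 0)
      \<longleftrightarrow> (\<forall>j\<in>{0..m}. lookup a (Z j) > 0) \<and> (\<forall>j\<in>{k..l}. lookup a (Zo j) > 0 \<and> lookup a (Zu j) > 0)"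
    by (auto simp: relvars_def)
  then show ?thesis
    unfolding sol_def column_equations_def Let_def
    by (simp add: conj_assoc flip: of_nat_add)
qed

text \<open>The points of the poset are the heights of the corners of the figure: \<open>pt_top c\<close> and
  \<open>pt_bot c\<close> are the top and the bottom of column \<open>c\<close> of the figure (\<open>1 \<le> c \<le> m\<close>), and
  \<open>pt_hole_top c\<close>, \<open>pt_hole_bot c\<close> those of column \<open>c\<close> of the hole (\<open>k < c \<le> l\<close>). Each
  unknown is the difference of the heights of two points, \<open>hi v\<close> above \<open>lo v\<close>.\<close>

locale staircase_with_hole =
  fixes k l m :: nat
  assumes k_pos: "0 < k" and hole_wide: "k + 2 \<le> l" and l_less_m: "l < m"
begin

lemmas staircase_bounds = k_pos hole_wide l_less_m

definition hole_width :: nat where "hole_width = l - k"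

lemma hole_width: "k + hole_width = l" "2 \<le> hole_width"
  using hole_wide by (simp_all add: hole_width_def)

definition npts :: nat where "npts = 2 * m + 2 * hole_width"

definition pt_top :: "nat \<Rightarrow> nat" where "pt_top c = c - 1"
definition pt_hole_top :: "nat \<Rightarrow> nat" where "pt_hole_top c = m + (c - k - 1)"
definition pt_hole_bot :: "nat \<Rightarrow> nat" where "pt_hole_bot c = m + hole_width + (c - k - 1)"
definition pt_bot :: "nat \<Rightarrow> nat" where "pt_bot c = m + 2 * hole_width + (c - 1)"

fun lo :: "var \<Rightarrow> nat" where
  "lo (Yo j) = pt_top j"
| "lo (Yu j) = pt_bot j"
| "lo (Wo j) = pt_hole_top j"
| "lo (Wu j) = pt_hole_bot j"
| "lo (Z j) = (if j = 0 then pt_bot 1 else if j = m then pt_bot m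
     else if j < k \<or> l < j then pt_bot (Suc j)
     else if j = k then pt_hole_bot (Suc k) else if j < l then pt_hole_bot (Suc j) else pt_hole_bot l)"
| "lo (Zo j) = (if j < l then pt_hole_top (Suc j) else pt_hole_top l)"
| "lo (Zu j) = pt_bot (Suc j)"

fun hi :: "var \<Rightarrow> nat" where
  "hi (Yo j) = pt_top (Suc j)"
| "hi (Yu j) = pt_bot (Suc j)"
| "hi (Wo j) = pt_hole_top (Suc j)"
| "hi (Wu j) = pt_hole_bot (Suc j)"
| "hi (Z j) = (if j = 0 then pt_top 1 else if j = m then pt_top m else if j < k \<or> l < j then pt_top j
     else if j = k then pt_hole_top (Suc k) else if j < l then pt_hole_top j else pt_hole_top l)"
| "hi (Zo j) = pt_top j"
| "hi (Zu j) = (if j = k then pt_hole_bot (Suc k) else pt_hole_bot j)"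

lemma lo_hi_less: "v \<in> relvars k l m \<Longrightarrow> lo v < npts \<and> hi v < npts \<and> lo v \<noteq> hi v"
  using k_pos hole_width l_less_m
  by (cases v) (auto simp: npts_def pt_top_def pt_hole_top_def pt_hole_bot_def pt_bot_def)

lemma hi_less_lo_iff: "v \<in> relvars k l m \<Longrightarrow> hi v < lo v \<longleftrightarrow> strict_var v"
  using k_pos hole_width l_less_m
  by (cases v) (auto simp: pt_top_def pt_hole_top_def pt_hole_bot_def pt_bot_def)

lemma point_cases:
  assumes "i < npts"
  obtains c where "1 \<le> c" "c \<le> m" "i = pt_top c"
    | c where "k + 1 \<le> c" "c \<le> l" "i = pt_hole_top c"
    | c where "k + 1 \<le> c" "c \<le> l" "i = pt_hole_bot c"
    | c where "1 \<le> c" "c \<le> m" "i = pt_bot c"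
proof -
  consider "i < m" | "m \<le> i" "i < m + hole_width" | "m + hole_width \<le> i" "i < m + 2 * hole_width"
    | "m + 2 * hole_width \<le> i" by linarith
  then show ?thesis
  proof cases
    case 1
    then show ?thesis using that(1)[of "Suc i"] by (simp add: pt_top_def)
  next
    case 2
    then show ?thesis using that(2)[of "i - m + k + 1"] hole_width by (simp add: pt_hole_top_def)
  next
    case 3
    then show ?thesis using that(3)[of "i - (m + hole_width) + k + 1"] hole_width
      by (simp add: pt_hole_bot_def)
  next
    case 4
    then show ?thesis using that(4)[of "i - (m + 2 * hole_width) + 1"] assms
      by (simp add: pt_bot_def npts_def)
  qed
qed

definition point_column :: "nat \<Rightarrow> nat" where
  "point_column i = (if i < m then Suc i
     else if i < m + hole_width then i - m + k + 1
     else if i < m + 2 * hole_width then i - (m + hole_width) + k + 1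
     else i - (m + 2 * hole_width) + 1)"

lemma pt_top_column:
  assumes "1 \<le> c" "c \<le> m"
  shows "pt_top c < m" "point_column (pt_top c) = c"
proof -
  have "pt_top c < m" "Suc (pt_top c) = c"
    using assms by (simp_all add: pt_top_def)
  then show "pt_top c < m" "point_column (pt_top c) = c"
    by (simp_all add: point_column_def)
qed

lemma pt_hole_top_column:
  assumes "k + 1 \<le> c" "c \<le> l"
  shows "\<not> pt_hole_top c < m" "pt_hole_top c < m + hole_width" "point_column (pt_hole_top c) = c"
proof -
  have "\<not> pt_hole_top c < m" "pt_hole_top c < m + hole_width" "pt_hole_top c - m + k + 1 = c"
    using assms hole_width by (simp_all add: pt_hole_top_def)
  then show "\<not> pt_hole_top c < m" "pt_hole_top c < m + hole_width" "point_column (pt_hole_top c) = c"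
    by (simp_all add: point_column_def)
qed

lemma pt_hole_bot_column:
  assumes "k + 1 \<le> c" "c \<le> l"
  shows "\<not> pt_hole_bot c < m" "\<not> pt_hole_bot c < m + hole_width" "pt_hole_bot c < m + 2 * hole_width"
    "point_column (pt_hole_bot c) = c"
proof -
  have "\<not> pt_hole_bot c < m" "\<not> pt_hole_bot c < m + hole_width" "pt_hole_bot c < m + 2 * hole_width"
    "pt_hole_bot c - (m + hole_width) + k + 1 = c"
    using assms hole_width by (simp_all add: pt_hole_bot_def)
  then show "\<not> pt_hole_bot c < m" "\<not> pt_hole_bot c < m + hole_width"
    "pt_hole_bot c < m + 2 * hole_width" "point_column (pt_hole_bot c) = c"
    by (simp_all add: point_column_def)
qed

lemma pt_bot_column:
  assumes "1 \<le> c" "c \<le> m"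
  shows "\<not> pt_bot c < m" "\<not> pt_bot c < m + hole_width" "\<not> pt_bot c < m + 2 * hole_width"
    "point_column (pt_bot c) = c"
proof -
  have "\<not> pt_bot c < m" "\<not> pt_bot c < m + hole_width" "\<not> pt_bot c < m + 2 * hole_width"
    "pt_bot c - (m + 2 * hole_width) + 1 = c"
    using assms by (simp_all add: pt_bot_def)
  then show "\<not> pt_bot c < m" "\<not> pt_bot c < m + hole_width" "\<not> pt_bot c < m + 2 * hole_width"
    "point_column (pt_bot c) = c"
    by (simp_all add: point_column_def)
qed

definition on_vars :: "(var \<Rightarrow> int) \<Rightarrow> var \<Rightarrow> int" where
  "on_vars f v = (if v \<in> relvars k l m then f v else 0)"

text \<open>Heights measured from the bottom of the first column, obtained by walking along the lower
  boundary and then up through the figure.\<close>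

definition height_bot :: "(var \<Rightarrow> int) \<Rightarrow> nat \<Rightarrow> int" where
  "height_bot f c = (\<Sum>j\<in>{1..<c}. on_vars f (Yu j))"

definition height_hole_bot :: "(var \<Rightarrow> int) \<Rightarrow> nat \<Rightarrow> int" where
  "height_hole_bot f c = height_bot f (Suc c) + on_vars f (Zu c)"

definition height_hole_top :: "(var \<Rightarrow> int) \<Rightarrow> nat \<Rightarrow> int" where
  "height_hole_top f c = (if c < l then height_hole_bot f (Suc c) + on_vars f (Z c)
     else height_hole_bot f l + on_vars f (Z l))"

definition height_top :: "(var \<Rightarrow> int) \<Rightarrow> nat \<Rightarrow> int" where
  "height_top f c = (if c = m then height_bot f m + on_vars f (Z m)
     else if c < k \<or> l < c then height_bot f (Suc c) + on_vars f (Z c)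
     else if c < l then height_hole_top f (Suc c) + on_vars f (Zo c)
     else height_hole_top f l + on_vars f (Zo l))"

definition heights :: "(var \<Rightarrow> int) \<Rightarrow> nat \<Rightarrow> int" where
  "heights f i = (if i < m then height_top f (point_column i)
     else if i < m + hole_width then height_hole_top f (point_column i)
     else if i < m + 2 * hole_width then height_hole_bot f (point_column i)
     else height_bot f (point_column i))"

lemma heights_pt_top: "1 \<le> c \<Longrightarrow> c \<le> m \<Longrightarrow> heights f (pt_top c) = height_top f c"
  by (simp add: heights_def pt_top_column)

lemma heights_pt_hole_top: "k + 1 \<le> c \<Longrightarrow> c \<le> l \<Longrightarrow> heights f (pt_hole_top c) = height_hole_top f c"
  by (simp add: heights_def pt_hole_top_column)

lemma heights_pt_hole_bot: "k + 1 \<le> c \<Longrightarrow> c \<le> l \<Longrightarrow> heights f (pt_hole_bot c) = height_hole_bot f c"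
  by (simp add: heights_def pt_hole_bot_column)

lemma heights_pt_bot: "1 \<le> c \<Longrightarrow> c \<le> m \<Longrightarrow> heights f (pt_bot c) = height_bot f c"
  by (simp add: heights_def pt_bot_column)

lemma height_bot_Suc: "1 \<le> c \<Longrightarrow> height_bot f (Suc c) = height_bot f c + on_vars f (Yu c)"
  by (simp add: height_bot_def)

lemma heights_on_vars: "heights (on_vars f) = heights f"
proof -
  have "on_vars (on_vars f) = on_vars f"
    by (simp add: fun_eq_iff on_vars_def)
  then have "height_bot (on_vars f) = height_bot f"
    by (simp add: fun_eq_iff height_bot_def)
  moreover from calculation have "height_hole_bot (on_vars f) = height_hole_bot f"
    by (simp add: fun_eq_iff height_hole_bot_def \<open>on_vars (on_vars f) = on_vars f\<close>)
  moreover from calculation have "height_hole_top (on_vars f) = height_hole_top f"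
    by (simp add: fun_eq_iff height_hole_top_def \<open>on_vars (on_vars f) = on_vars f\<close>)
  moreover from calculation have "height_top (on_vars f) = height_top f"
    by (simp add: fun_eq_iff height_top_def \<open>on_vars (on_vars f) = on_vars f\<close>)
  ultimately show ?thesis
    by (intro ext) (simp add: heights_def)
qed

lemma heights_of_diffs:
  assumes "i < npts"
  shows "heights (\<lambda>v. h (hi v) - h (lo v)) i = h i - h (pt_bot 1)"
proof -
  let ?f = "\<lambda>v. h (hi v) - h (lo v)"
  have bot: "height_bot ?f c = h (pt_bot c) - h (pt_bot 1)" if "1 \<le> c" "c \<le> m" for c
    using that
  proof (induction c rule: nat_induct_at_least)
    case (Suc c)
    then have "c \<le> m - 1" by simp
    then show ?case using Suc by (simp add: height_bot_Suc on_vars_def)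
  qed (simp add: height_bot_def)
  have hole_bot: "height_hole_bot ?f c = h (pt_hole_bot c) - h (pt_bot 1)"
    if "k + 1 \<le> c" "c \<le> l" for c
    using that hole_wide l_less_m by (simp add: height_hole_bot_def bot on_vars_def)
  have hole_top: "height_hole_top ?f c = h (pt_hole_top c) - h (pt_bot 1)"
    if "k + 1 \<le> c" "c \<le> l" for c
    using that hole_wide l_less_m by (auto simp: height_hole_top_def hole_bot on_vars_def)
  have top: "height_top ?f c = h (pt_top c) - h (pt_bot 1)" if c: "1 \<le> c" "c \<le> m" for c
  proof -
    consider "c = m" | "c \<noteq> m" "c < k \<or> l < c" | "k \<le> c" "c < l" | "c = l"
      using l_less_m by linarith
    then show ?thesis
    proof cases
      case 4
      then show ?thesis
        using hole_top[of l] hole_wide l_less_m by (simp add: height_top_def on_vars_def)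
    qed (use c staircase_bounds in \<open>simp_all add: height_top_def bot hole_top on_vars_def\<close>)
  qed
  show ?thesis
    by (rule point_cases[OF assms])
      (simp_all add: heights_pt_top heights_pt_hole_top heights_pt_hole_bot heights_pt_bot
        top hole_top hole_bot bot)
qed

lemma diffs_determine_heights:
  assumes "\<forall>v\<in>relvars k l m. h (hi v) - h (lo v) = h' (hi v) - h' (lo v)"
  shows "\<exists>c. \<forall>i<npts. h i = h' i + (c::int)"
proof -
  have "on_vars (\<lambda>v. h (hi v) - h (lo v)) = on_vars (\<lambda>v. h' (hi v) - h' (lo v))"
    using assms by (auto simp: fun_eq_iff on_vars_def)
  then have "\<forall>i<npts. h i - h (pt_bot 1) = h' i - h' (pt_bot 1)"
    by (metis heights_of_diffs heights_on_vars)
  then show ?thesis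
    by (intro exI[of _ "h (pt_bot 1) - h' (pt_bot 1)"]) (auto simp: algebra_simps)
qed

sublocale poset_partitions npts lo hi "relvars k l m"
  by unfold_locales (use lo_hi_less diffs_determine_heights in \<open>auto simp: relvars_def\<close>)

lemma strict_edge_iff:
  "v \<in> relvars k l m \<Longrightarrow> strict_edge False v \<longleftrightarrow> strict_var v"
  "v \<in> relvars k l m \<Longrightarrow> strict_edge True v \<longleftrightarrow> \<not> strict_var v"
  using hi_less_lo_iff[of v] lo_hi_less[of v]
  by (auto simp: strict_edge_def label_def)

text \<open>The strict unknowns whose positivity follows from the system and the positivity of the
  other strict unknowns.\<close>

definition redundant :: "var \<Rightarrow> bool" where
  "redundant v \<longleftrightarrow> v \<in> {Z 0, Z m, Z k, Z l, Zu k, Zo l}"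

context
  fixes f :: "var \<Rightarrow> int"
  assumes equations: "column_equations k l m f"
    and vanishes: "\<And>v. v \<notin> relvars k l m \<Longrightarrow> f v = 0"
begin

lemma on_vars_eq [simp]: "on_vars f = f"
  using vanishes by (auto simp: fun_eq_iff on_vars_def)

lemma vanishes_Yo_0: "f (Yo 0) = 0"
  by (simp add: vanishes)

lemma vanishes_Yu_m: "f (Yu m) = 0"
  using l_less_m by (simp add: vanishes)

lemma eq_before: "j + 2 \<le> k \<Longrightarrow> f (Z j) + f (Yo j) = f (Z (j+1)) + f (Yu (j+1))"
  using equations by (simp add: column_equations_def)

lemma eq_split: "f (Z (k-1)) + f (Yo (k-1)) = f (Zo k) + f (Z k) + f (Zu k) + f (Yu k)"
  using equations by (simp add: column_equations_def)

lemma eq_merge: "f (Zu l) + f (Z l) + f (Zo l) + f (Yo l) = f (Z (l+1)) + f (Yu (l+1))"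
  using equations by (simp add: column_equations_def)

lemma eq_after: "l + 1 \<le> j \<Longrightarrow> j \<le> m - 1 \<Longrightarrow> f (Z j) + f (Yo j) = f (Z (j+1)) + f (Yu (j+1))"
  using equations by (simp add: column_equations_def)

lemma eq_below_start: "f (Zu k) = f (Zu (k+1)) + f (Yu (k+1))"
  using equations by (simp add: column_equations_def)

lemma eq_below: "k + 1 \<le> j \<Longrightarrow> j \<le> l - 1 \<Longrightarrow> f (Zu j) + f (Wu j) = f (Zu (j+1)) + f (Yu (j+1))"
  using equations by (simp add: column_equations_def)

lemma eq_above: "k \<le> j \<Longrightarrow> j + 2 \<le> l \<Longrightarrow> f (Zo j) + f (Yo j) = f (Zo (j+1)) + f (Wo (j+1))"
  using equations by (simp add: column_equations_def)

lemma eq_above_end: "f (Zo (l-1)) + f (Yo (l-1)) = f (Zo l)"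
  using equations by (simp add: column_equations_def)

lemma eq_hole_start: "f (Z k) = f (Z (k+1)) + f (Wu (k+1))"
  using equations by (simp add: column_equations_def)

lemma eq_hole: "k + 1 \<le> j \<Longrightarrow> j + 2 \<le> l \<Longrightarrow> f (Z j) + f (Wo j) = f (Z (j+1)) + f (Wu (j+1))"
  using equations by (simp add: column_equations_def)

lemma eq_hole_end: "f (Z (l-1)) + f (Wo (l-1)) = f (Z l)"
  using equations by (simp add: column_equations_def)

lemma diff_Yu: "1 \<le> j \<Longrightarrow> j < m \<Longrightarrow> height_bot f (Suc j) - height_bot f j = f (Yu j)"
  by (simp add: height_bot_Suc)

lemma diff_Zu: "k < j \<Longrightarrow> j \<le> l \<Longrightarrow> height_hole_bot f j - height_bot f (Suc j) = f (Zu j)"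
  by (simp add: height_hole_bot_def)

lemma diff_Zu_k: "height_hole_bot f (Suc k) - height_bot f (Suc k) = f (Zu k)"
proof -
  have "height_bot f (Suc (Suc k)) - height_bot f (Suc k) = f (Yu (Suc k))"
    by (rule diff_Yu) (use staircase_bounds in auto)
  moreover have "height_hole_bot f (Suc k) - height_bot f (Suc (Suc k)) = f (Zu (Suc k))"
    by (rule diff_Zu) (use staircase_bounds in auto)
  ultimately show ?thesis using eq_below_start by simp
qed

lemma diff_Wu:
  assumes "k+1 \<le> j" "j \<le> l-1"
  shows "height_hole_bot f (Suc j) - height_hole_bot f j = f (Wu j)"
proof -
  have "height_bot f (Suc (Suc j)) - height_bot f (Suc j) = f (Yu (Suc j))"
    by (rule diff_Yu) (use assms staircase_bounds in auto)
  moreover have "height_hole_bot f (Suc j) - height_bot f (Suc (Suc j)) = f (Zu (Suc j))"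
    by (rule diff_Zu) (use assms staircase_bounds in auto)
  moreover have "height_hole_bot f j - height_bot f (Suc j) = f (Zu j)"
    by (rule diff_Zu) (use assms staircase_bounds in auto)
  ultimately show ?thesis using eq_below[OF assms] by simp
qed

lemma diff_Z_hole: "k < j \<Longrightarrow> j < l \<Longrightarrow> height_hole_top f j - height_hole_bot f (Suc j) = f (Z j)"
  using l_less_m by (simp add: height_hole_top_def)

lemma diff_Z_l: "height_hole_top f l - height_hole_bot f l = f (Z l)"
  using l_less_m by (simp add: height_hole_top_def)

lemma diff_Z_k: "height_hole_top f (Suc k) - height_hole_bot f (Suc k) = f (Z k)"
proof -
  have "height_hole_bot f (Suc (Suc k)) - height_hole_bot f (Suc k) = f (Wu (Suc k))"
    by (rule diff_Wu) (use staircase_bounds in auto)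
  moreover have "height_hole_top f (Suc k) - height_hole_bot f (Suc (Suc k)) = f (Z (Suc k))"
    by (rule diff_Z_hole) (use staircase_bounds in auto)
  ultimately show ?thesis using eq_hole_start by simp
qed

lemma diff_Wo:
  assumes "k+1 \<le> j" "j \<le> l-1"
  shows "height_hole_top f (Suc j) - height_hole_top f j = f (Wo j)"
proof (cases "Suc j < l")
  case True
  have "height_hole_bot f (Suc (Suc j)) - height_hole_bot f (Suc j) = f (Wu (Suc j))"
    by (rule diff_Wu) (use True assms staircase_bounds in auto)
  moreover have "height_hole_top f (Suc j) - height_hole_bot f (Suc (Suc j)) = f (Z (Suc j))"
    by (rule diff_Z_hole) (use True assms staircase_bounds in auto)
  moreover have "height_hole_top f j - height_hole_bot f (Suc j) = f (Z j)"
    by (rule diff_Z_hole) (use True assms staircase_bounds in auto)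
  moreover have "f (Z j) + f (Wo j) = f (Z (Suc j)) + f (Wu (Suc j))"
    using eq_hole[of j] True assms by simp
  ultimately show ?thesis by simp
next
  case False
  then have l: "l = Suc j" using assms hole_wide by simp
  have "height_hole_top f j - height_hole_bot f (Suc j) = f (Z j)"
    by (rule diff_Z_hole) (use l assms staircase_bounds in auto)
  moreover have "height_hole_top f (Suc j) - height_hole_bot f (Suc j) = f (Z (Suc j))"
    using diff_Z_l l by simp
  moreover have "f (Z j) + f (Wo j) = f (Z (Suc j))" using eq_hole_end l by simp
  ultimately show ?thesis by simp
qed

lemma diff_Zo: "k \<le> j \<Longrightarrow> j < l \<Longrightarrow> height_top f j - height_hole_top f (Suc j) = f (Zo j)"
  using l_less_m by (simp add: height_top_def)

lemma diff_Zo_l: "height_top f l - height_hole_top f l = f (Zo l)"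
  using l_less_m hole_wide by (simp add: height_top_def)

lemma diff_Z_outside:
  "1 \<le> j \<Longrightarrow> j < k \<or> l < j \<Longrightarrow> j < m \<Longrightarrow> height_top f j - height_bot f (Suc j) = f (Z j)"
  by (auto simp: height_top_def)

lemma diff_Z_m: "height_top f m - height_bot f m = f (Z m)"
  by (simp add: height_top_def)

lemma diff_Z_0: "height_top f 1 - height_bot f 1 = f (Z 0)"
proof (cases "1 < k")
  case True
  have "height_top f 1 - height_bot f 2 = f (Z 1)"
    using diff_Z_outside[of 1] True l_less_m hole_wide by (simp add: numeral_2_eq_2)
  moreover have "height_bot f 2 - height_bot f 1 = f (Yu 1)"
    using diff_Yu[of 1] l_less_m hole_wide by (simp add: numeral_2_eq_2)
  moreover have "f (Z 0) = f (Z 1) + f (Yu 1)" using eq_before[of 0] True vanishes_Yo_0 by simp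
  ultimately show ?thesis by simp
next
  case False
  then have k1: "k = 1" using k_pos by simp
  have "height_top f 1 - height_hole_top f 2 = f (Zo 1)"
    using diff_Zo[of 1] k1 hole_wide by (simp add: numeral_2_eq_2)
  moreover have "height_hole_top f 2 - height_hole_bot f 2 = f (Z 1)"
    using diff_Z_k k1 by (simp add: numeral_2_eq_2)
  moreover have "height_hole_bot f 2 - height_bot f 2 = f (Zu 1)"
    using diff_Zu_k k1 by (simp add: numeral_2_eq_2)
  moreover have "height_bot f 2 - height_bot f 1 = f (Yu 1)"
    using diff_Yu[of 1] l_less_m hole_wide by (simp add: numeral_2_eq_2)
  ultimately show ?thesis using eq_split k1 vanishes_Yo_0 by simp
qed

lemma diff_Yo_left:
  assumes j: "1 \<le> j" "Suc j \<le> k"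
  shows "height_top f (Suc j) - height_top f j = f (Yo j)"
proof (cases "Suc j < k")
  case True
  have "height_top f j - height_bot f (Suc j) = f (Z j)"
    by (rule diff_Z_outside) (use True j staircase_bounds in auto)
  moreover have "height_top f (Suc j) - height_bot f (Suc (Suc j)) = f (Z (Suc j))"
    by (rule diff_Z_outside) (use True j staircase_bounds in auto)
  moreover have "height_bot f (Suc (Suc j)) - height_bot f (Suc j) = f (Yu (Suc j))"
    by (rule diff_Yu) (use True j staircase_bounds in auto)
  moreover have "f (Z j) + f (Yo j) = f (Z (Suc j)) + f (Yu (Suc j))"
    using eq_before[of j] True by simp
  ultimately show ?thesis by simp
next
  case False
  have "height_top f k - height_hole_top f (Suc k) = f (Zo k)"
    by (rule diff_Zo) (use staircase_bounds in auto)
  moreover have "height_top f j - height_bot f k = f (Z j)"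
    using diff_Z_outside[of j] False j staircase_bounds by simp
  moreover have "height_bot f (Suc k) - height_bot f k = f (Yu k)"
    by (rule diff_Yu) (use staircase_bounds in auto)
  moreover have "f (Z j) + f (Yo j) = f (Zo k) + f (Z k) + f (Zu k) + f (Yu k)"
  proof -
    have "j = k - 1" using False j by simp
    then show ?thesis using eq_split by simp
  qed
  ultimately show ?thesis using diff_Z_k diff_Zu_k False j by simp
qed

lemma diff_Yo_above:
  assumes j: "k \<le> j" "j < l"
  shows "height_top f (Suc j) - height_top f j = f (Yo j)"
proof (cases "j + 2 \<le> l")
  case True
  have "height_top f j - height_hole_top f (Suc j) = f (Zo j)"
    by (rule diff_Zo) (use True j staircase_bounds in auto)
  moreover have "height_top f (Suc j) - height_hole_top f (Suc (Suc j)) = f (Zo (Suc j))"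
    by (rule diff_Zo) (use True j staircase_bounds in auto)
  moreover have "height_hole_top f (Suc (Suc j)) - height_hole_top f (Suc j) = f (Wo (Suc j))"
    by (rule diff_Wo) (use True j staircase_bounds in auto)
  moreover have "f (Zo j) + f (Yo j) = f (Zo (Suc j)) + f (Wo (Suc j))"
    using eq_above[of j] True j by simp
  ultimately show ?thesis by simp
next
  case False
  have "height_top f j - height_hole_top f (Suc j) = f (Zo j)"
    by (rule diff_Zo) (use False j staircase_bounds in auto)
  moreover have "Suc j = l"
    using False j by simp
  moreover have "f (Zo j) + f (Yo j) = f (Zo (Suc j))"
    using eq_above_end \<open>Suc j = l\<close> by (metis diff_Suc_1)
  ultimately show ?thesis using diff_Zo_l by simp
qed

lemma diff_Yo_right:
  assumes j: "l \<le> j" "j \<le> m - 1"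
  shows "height_top f (Suc j) - height_top f j = f (Yo j)"
proof (cases "j = l")
  case jl: True
  have "height_hole_bot f l - height_bot f (Suc l) = f (Zu l)"
    by (rule diff_Zu) (use staircase_bounds in auto)
  then have L: "height_top f l - height_bot f (Suc l) = f (Zo l) + f (Z l) + f (Zu l)"
    using diff_Zo_l diff_Z_l by simp
  show ?thesis
  proof (cases "Suc l < m")
    case True
    have "height_top f (Suc l) - height_bot f (Suc (Suc l)) = f (Z (Suc l))"
      by (rule diff_Z_outside) (use True staircase_bounds in auto)
    moreover have "height_bot f (Suc (Suc l)) - height_bot f (Suc l) = f (Yu (Suc l))"
      by (rule diff_Yu) (use True staircase_bounds in auto)
    ultimately show ?thesis using L eq_merge jl by simp
  next
    case False
    then have "Suc l = m" using l_less_m by simp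
    then show ?thesis using L diff_Z_m eq_merge jl vanishes_Yu_m by simp
  qed
next
  case jl: False
  have A: "height_top f j - height_bot f (Suc j) = f (Z j)"
    by (rule diff_Z_outside) (use jl j staircase_bounds in auto)
  have E: "f (Z j) + f (Yo j) = f (Z (Suc j)) + f (Yu (Suc j))"
    using eq_after[of j] jl j by simp
  show ?thesis
  proof (cases "Suc j < m")
    case True
    have "height_top f (Suc j) - height_bot f (Suc (Suc j)) = f (Z (Suc j))"
      by (rule diff_Z_outside) (use True jl j staircase_bounds in auto)
    moreover have "height_bot f (Suc (Suc j)) - height_bot f (Suc j) = f (Yu (Suc j))"
      by (rule diff_Yu) (use True staircase_bounds in auto)
    ultimately show ?thesis using A E by simp
  next
    case False
    then have "Suc j = m" using j l_less_m by simp
    then show ?thesis using A E diff_Z_m vanishes_Yu_m by simp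
  qed
qed

lemma diff_Yo: "1 \<le> j \<Longrightarrow> j \<le> m - 1 \<Longrightarrow> height_top f (Suc j) - height_top f j = f (Yo j)"
  using diff_Yo_left[of j] diff_Yo_above[of j] diff_Yo_right[of j] by linarith

lemma edge_diff_heights:
  assumes "v \<in> relvars k l m"
  shows "edge_diff (heights f) v = f v"
proof (cases v)
  case (Z j)
  then have "j \<le> m" using assms by simp
  then consider "j = 0" | "j = m" | "1 \<le> j" "j < m" "j < k \<or> l < j" | "j = k" | "k < j" "j < l" | "j = l"
    using staircase_bounds by linarith
  then show ?thesis
    using Z diff_Z_0 diff_Z_m diff_Z_outside[of j] diff_Z_k diff_Z_hole[of j] diff_Z_l staircase_bounds
    by cases (auto simp: edge_diff_def heights_pt_top heights_pt_bot heights_pt_hole_top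
        heights_pt_hole_bot)
qed (use assms staircase_bounds diff_Yo diff_Yu diff_Wo diff_Wu diff_Zo diff_Zo_l diff_Zu_k diff_Zu
    in \<open>auto simp: edge_diff_def heights_pt_top heights_pt_bot heights_pt_hole_top
      heights_pt_hole_bot\<close>)

lemma redundant_positive:
  assumes nonneg: "\<And>v. v \<in> relvars k l m \<Longrightarrow> f v \<ge> 0"
    and positive: "\<And>v. v \<in> relvars k l m \<Longrightarrow> strict_var v \<Longrightarrow> \<not> redundant v \<Longrightarrow> f v \<ge> 1"
    and "redundant v"
  shows "f v \<ge> 1"
proof -
  consider "v = Z 0" | "v = Z m" | "v = Z k" | "v = Z l" | "v = Zu k" | "v = Zo l"
    using \<open>redundant v\<close> by (auto simp: redundant_def)
  then show ?thesis
  proof cases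
    case 1
    show ?thesis
    proof (cases "1 < k")
      case True
      then have "f (Z 1) \<ge> 1" "f (Yu 1) \<ge> 0"
        using positive[of "Z 1"] nonneg[of "Yu 1"] staircase_bounds by (auto simp: redundant_def)
      then show ?thesis using 1 True eq_before[of 0] vanishes_Yo_0 by simp
    next
      case False
      then have "k = 1" using k_pos by simp
      have "f (Zo k) \<ge> 1" "f (Z k) \<ge> 0" "f (Zu k) \<ge> 0" "f (Yu k) \<ge> 0"
        using positive[of "Zo k"] nonneg[of "Z k"] nonneg[of "Zu k"] nonneg[of "Yu k"] staircase_bounds
        by (auto simp: redundant_def)
      then show ?thesis using 1 \<open>k = 1\<close> eq_split vanishes_Yo_0 by simp
    qed
  next
    case 2
    show ?thesis
    proof (cases "l + 1 < m")
      case True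
      then have "m - 1 \<noteq> 0" "m - 1 \<noteq> m" "m - 1 \<noteq> k" "m - 1 \<noteq> l"
        using staircase_bounds by auto
      then have "f (Z (m - 1)) \<ge> 1" "f (Yo (m - 1)) \<ge> 0"
        using positive[of "Z (m - 1)"] nonneg[of "Yo (m - 1)"] by (auto simp: redundant_def)
      moreover have "l + 1 \<le> m - 1" "m - 1 \<le> m - 1" "Suc (m - 1) = m"
        using True by auto
      ultimately show ?thesis
        using 2 eq_after[of "m - 1"] vanishes_Yu_m by simp
    next
      case False
      then have "m = l + 1" using l_less_m by simp
      have "f (Zu l) \<ge> 1" "f (Z l) \<ge> 0" "f (Zo l) \<ge> 0" "f (Yo l) \<ge> 0"
        using positive[of "Zu l"] nonneg[of "Z l"] nonneg[of "Zo l"] nonneg[of "Yo l"] staircase_bounds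
        by (auto simp: redundant_def)
      then show ?thesis using 2 \<open>m = l + 1\<close> eq_merge vanishes_Yu_m by simp
    qed
  next
    case 3
    have "f (Z (k + 1)) \<ge> 1" "f (Wu (k + 1)) \<ge> 0"
      using positive[of "Z (k + 1)"] nonneg[of "Wu (k + 1)"] staircase_bounds
        by (auto simp: redundant_def)
    then show ?thesis using 3 eq_hole_start by simp
  next
    case 4
    have "l - 1 \<noteq> 0" "l - 1 \<noteq> m" "l - 1 \<noteq> k" "l - 1 \<noteq> l" "l - 1 \<le> m" "k + 1 \<le> l - 1"
      using staircase_bounds by auto
    then have "f (Z (l - 1)) \<ge> 1" "f (Wo (l - 1)) \<ge> 0"
      using positive[of "Z (l - 1)"] nonneg[of "Wo (l - 1)"] by (auto simp: redundant_def)
    then show ?thesis using 4 eq_hole_end by simp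
  next
    case 5
    have "f (Zu (k + 1)) \<ge> 1" "f (Yu (k + 1)) \<ge> 0"
      using positive[of "Zu (k + 1)"] nonneg[of "Yu (k + 1)"] staircase_bounds
        by (auto simp: redundant_def)
    then show ?thesis using 5 eq_below_start by simp
  next
    case 6
    have "1 \<le> l - 1" "l - 1 \<le> m - 1" "k \<le> l - 1" "l - 1 \<noteq> l"
      using staircase_bounds by auto
    then have "f (Zo (l - 1)) \<ge> 1" "f (Yo (l - 1)) \<ge> 0"
      using positive[of "Zo (l - 1)"] nonneg[of "Yo (l - 1)"] by (auto simp: redundant_def)
    then show ?thesis using 6 eq_above_end by simp
  qed
qed

end

lemma column_equations_edge_diff: "column_equations k l m (on_vars (edge_diff h))"
proof -
  have split: "on_vars (edge_diff h) (Z (k - 1)) + on_vars (edge_diff h) (Yo (k - 1))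
      = on_vars (edge_diff h) (Zo k) + on_vars (edge_diff h) (Z k) + on_vars (edge_diff h) (Zu k)
        + on_vars (edge_diff h) (Yu k)"
  proof (cases "k = 1")
    case True
    then have "k - 1 = 0" "pt_top k = pt_top 1" "pt_bot k = pt_bot 1" "k \<le> m - 1"
      using staircase_bounds by simp_all
    then show ?thesis
      using staircase_bounds by (simp add: on_vars_def edge_diff_def)
  next
    case False
    then have "1 \<le> k - 1" "k - 1 \<le> m - 1" "k \<le> m - 1" "k - 1 \<noteq> m" "k - 1 \<noteq> 0"
      "k - 1 < k" "Suc (k - 1) = k" "k \<noteq> m" "k < l" "k \<le> m" "k - 1 \<le> m"
      using staircase_bounds by auto
    then show ?thesis
      using staircase_bounds by (simp add: on_vars_def edge_diff_def)
  qed
  show ?thesis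
    unfolding column_equations_def
    using staircase_bounds split
    by (intro conjI allI impI) (auto simp: on_vars_def edge_diff_def not_less_eq_eq)
qed

definition relaxed_partitions :: "(nat \<Rightarrow> int) set" where
  "relaxed_partitions =
     {h. \<forall>v\<in>relvars k l m. edge_diff h v \<ge> of_bool (strict_var v \<and> \<not> redundant v)}"

lemma partitions_False_eq_relaxed: "partitions False = relaxed_partitions"
proof (intro equalityI subsetI)
  fix h
  assume "h \<in> partitions False"
  then show "h \<in> relaxed_partitions"
    by (auto simp: partitions_def relaxed_partitions_def strict_edge_iff intro: order_trans[rotated])
next
  fix h
  assume h: "h \<in> relaxed_partitions"
  let ?f = "on_vars (edge_diff h)"
  have nonneg: "?f v \<ge> 0" if "v \<in> relvars k l m" for v
    using h that by (auto simp: relaxed_partitions_def on_vars_def intro: order_trans[rotated])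
  have positive: "?f v \<ge> 1" if "v \<in> relvars k l m" "strict_var v" "\<not> redundant v" for v
    using h that by (auto simp: relaxed_partitions_def on_vars_def)
  have vanish: "?f v = 0" if "v \<notin> relvars k l m" for v
    using that by (simp add: on_vars_def)
  have "?f v \<ge> 1" if "v \<in> relvars k l m" "strict_var v" for v
    using positive[OF that] redundant_positive[OF column_equations_edge_diff vanish nonneg positive]
    by blast
  then show "h \<in> partitions False"
    using nonneg by (auto simp: partitions_def strict_edge_iff on_vars_def)
qed

theorem sol_eq_exponent_partitions: "sol k l m = exponent ` partitions False"
proof (intro equalityI subsetI)
  fix a
  assume "a \<in> sol k l m"
  then have eqs: "column_equations k l m (\<lambda>v. int (lookup a v))"
    and keys: "keys a \<subseteq> relvars k l m"
    and pos: "\<And>v. v \<in> relvars k l m \<Longrightarrow> strict_var v \<Longrightarrow> lookup a v > 0"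
    by (auto simp: sol_iff)
  have vanish: "int (lookup a v) = 0" if "v \<notin> relvars k l m" for v
    using keys that by (auto simp: in_keys_iff)
  have diff: "edge_diff (heights (\<lambda>v. int (lookup a v))) v = int (lookup a v)"
    if "v \<in> relvars k l m" for v
    using edge_diff_heights[OF eqs vanish that] by blast
  have "heights (\<lambda>v. int (lookup a v)) \<in> partitions False"
    using pos by (auto simp: partitions_def strict_edge_iff diff Suc_le_eq)
  moreover have "exponent (heights (\<lambda>v. int (lookup a v))) = a"
    using vanish by (intro poly_mapping_eqI) (auto simp: lookup_exponent diff)
  ultimately show "a \<in> exponent ` partitions False"
    by (metis image_eqI)
next
  fix a
  assume "a \<in> exponent ` partitions False"
  then obtain h where h: "h \<in> partitions False" "a = exponent h" by auto
  have int_a: "(\<lambda>v. int (lookup a v)) = on_vars (edge_diff h)"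
    using int_lookup_exponent[OF h(1)] h(2) by (simp add: fun_eq_iff on_vars_def)
  have "keys a \<subseteq> relvars k l m"
    using h(2) by (auto simp: in_keys_iff lookup_exponent split: if_splits)
  moreover have "lookup a v > 0" if "v \<in> relvars k l m" "strict_var v" for v
  proof -
    have "edge_diff h v \<ge> 1"
      using h(1) that by (auto simp: partitions_def strict_edge_iff)
    then show ?thesis
      using fun_cong[OF int_a, of v] that by (simp add: on_vars_def)
  qed
  ultimately show "a \<in> sol k l m"
    by (simp add: sol_iff int_a column_equations_edge_diff)
qed

text \<open>Adding the column index to a partition lowers the increment of every non-redundant strict
  unknown by one and raises that of every weak unknown by one, which turns the strict inequalities
  into weak ones and vice versa.\<close>

definition column :: "nat \<Rightarrow> int" where
  "column i = int (point_column i)"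

lemma edge_diff_column:
  "v \<in> relvars k l m \<Longrightarrow>
    edge_diff column v = (if \<not> strict_var v then 1 else if redundant v then 0 else -1)"
  using staircase_bounds
  by (cases v) (auto simp: edge_diff_def column_def redundant_def pt_top_column pt_hole_top_column
      pt_hole_bot_column pt_bot_column)

definition num_monom :: "var \<Rightarrow>\<^sub>0 nat" where
  "num_monom = Poly_Mapping.single (Z k) 1 + Poly_Mapping.single (Z l) 1
     + (\<Sum>j\<in>{1..m-1}. Poly_Mapping.single (Yo j) 1 + Poly_Mapping.single (Yu j) 1)
     + (\<Sum>j\<in>{k+1..l-1}. Poly_Mapping.single (Wo j) 1 + Poly_Mapping.single (Wu j) 1)"

definition den_monom :: "var \<Rightarrow>\<^sub>0 nat" where
  "den_monom = (\<Sum>j\<in>{1..m-1}. Poly_Mapping.single (Z j) 1)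
     + (\<Sum>j\<in>{k+1..l}. Poly_Mapping.single (Zu j) 1) + (\<Sum>j\<in>{k..l-1}. Poly_Mapping.single (Zo j) 1)"

lemma mono_eval_num_monom: "mono_eval x num_monom = fac_num k l m x"
  by (simp add: num_monom_def fac_num_def mono_eval_add mono_eval_sum)

lemma mono_eval_den_monom: "mono_eval x den_monom = fac_den k l m x"
  by (simp add: den_monom_def fac_den_def mono_eval_add mono_eval_sum)

lemma lookup_num_monom:
  "lookup num_monom v = of_bool (v \<in> relvars k l m \<and> \<not> strict_var v) + of_bool (v = Z k \<or> v = Z l)"
  using hole_wide l_less_m
  by (cases v) (auto simp: num_monom_def lookup_add lookup_sum lookup_single when_def)

lemma lookup_den_monom:
  "lookup den_monom v = of_bool (v \<in> relvars k l m \<and> strict_var v \<and> v \<notin> {Z 0, Z m, Zu k, Zo l})"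
  using staircase_bounds
  by (cases v) (auto simp: den_monom_def lookup_add lookup_sum lookup_single when_def)

lemma shift_in_partitions_True_iff:
  "(\<lambda>i. h i + column i) \<in> partitions True \<longleftrightarrow> h \<in> relaxed_partitions"
proof -
  have "of_bool (strict_edge True v) \<le> edge_diff (\<lambda>i. h i + column i) v
      \<longleftrightarrow> of_bool (strict_var v \<and> \<not> redundant v) \<le> edge_diff h v" if "v \<in> relvars k l m" for v
    using that by (auto simp: strict_edge_iff edge_diff_add edge_diff_column)
  then show ?thesis
    by (simp add: partitions_def relaxed_partitions_def)
qed

lemma exponent_shift:
  assumes h: "h \<in> partitions False"
  shows "num_monom + exponent h = den_monom + exponent (\<lambda>i. h i + column i)"
proof (rule poly_mapping_eqI)
  fix v
  have shifted: "(\<lambda>i. h i + column i) \<in> partitions True"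
    using h by (simp add: shift_in_partitions_True_iff partitions_False_eq_relaxed)
  have "int (lookup num_monom v) + int (lookup (exponent h) v)
      = int (lookup den_monom v) + int (lookup (exponent (\<lambda>i. h i + column i)) v)"
    using staircase_bounds
    by (auto simp: int_lookup_exponent[OF h] int_lookup_exponent[OF shifted] lookup_num_monom
        lookup_den_monom edge_diff_add edge_diff_column redundant_def strict_var_def split: var.splits)
  then show "lookup (num_monom + exponent h) v = lookup (den_monom + exponent (\<lambda>i. h i + column i)) v"
    by (simp add: lookup_add)
qed

lemma shifted_exponents:
  "(+) num_monom ` exponent ` partitions False = (+) den_monom ` exponent ` partitions True"
proof (intro equalityI subsetI)
  fix a
  assume "a \<in> (+) num_monom ` exponent ` partitions False"
  then obtain h where "h \<in> partitions False" "a = num_monom + exponent h" by auto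
  moreover have "(\<lambda>i. h i + column i) \<in> partitions True"
    using calculation by (simp add: shift_in_partitions_True_iff partitions_False_eq_relaxed)
  ultimately show "a \<in> (+) den_monom ` exponent ` partitions True"
    using exponent_shift by auto
next
  fix a
  assume "a \<in> (+) den_monom ` exponent ` partitions True"
  then obtain h' where h': "h' \<in> partitions True" "a = den_monom + exponent h'" by auto
  define h where "h i = h' i - column i" for i
  have h'_eq: "(\<lambda>i. h i + column i) = h'"
    by (simp add: h_def fun_eq_iff)
  then have h: "h \<in> partitions False"
    using h' shift_in_partitions_True_iff[of h] by (simp add: partitions_False_eq_relaxed)
  then have "a = num_monom + exponent h"
    using exponent_shift[of h] h'_eq h'(2) by simp
  then show "a \<in> (+) num_monom ` exponent ` partitions False"
    using h by blast
qed

lemma numerator_shift: "monom num_monom * numerator False = monom den_monom * numerator True"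
proof -
  have "lookup (monom num_monom * numerator False)
      = series_mult denominator (indicator ((+) num_monom ` exponent ` partitions False))"
    by (rule lookup_monom_mult_series) (simp add: series_mult_partitions)
  also have "\<dots> = lookup (monom den_monom * numerator True)"
    unfolding shifted_exponents
    by (rule lookup_monom_mult_series[symmetric]) (simp add: series_mult_partitions)
  finally show ?thesis
    by (simp add: poly_mapping.lookup_inject)
qed

theorem gf_eq_ratfun_sol: "gf_eq_ratfun (sol k l m) (numerator False) denominator"
  by (simp add: gf_eq_ratfun_iff denominator_nonzero sol_eq_exponent_partitions
      series_mult_partitions)

theorem sol_reciprocity:
  assumes "\<And>v. x v \<noteq> 0"
  shows "peval (numerator False) (recip x) * peval denominator x * fac_den k l m x
    = - fac_num k l m x * peval (numerator False) x * peval denominator (recip x)"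
proof -
  have "fac_num k l m x * peval (numerator False) x = fac_den k l m x * peval (numerator True) x"
    using arg_cong[OF numerator_shift, of "\<lambda>p. peval p x"]
    by (simp add: peval_mult peval_monom mono_eval_num_monom mono_eval_den_monom)
  moreover have "odd (npts - 1)"
    using l_less_m by (simp add: npts_def)
  ultimately show ?thesis
    using partitions_reciprocity[OF assms] by (simp add: algebra_simps)
qed

end

theorem proposition3:
  fixes k l m :: nat
  assumes "0 < k" and "k < l" and "l < m" and "l - k > 1"
  shows "\<exists>P Q. gf_eq_ratfun (sol k l m) P Q \<and>
    (\<forall>x :: var \<Rightarrow> real. (\<forall>v. x v \<noteq> 0) \<longrightarrow>
       peval P (recip x) * peval Q x * fac_den k l m x
         = - fac_num k l m x * peval P x * peval Q (recip x))"
proof -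
  interpret staircase_with_hole k l m
    using assms by unfold_locales auto
  show ?thesis
    using gf_eq_ratfun_sol sol_reciprocity by blast
qed

end
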